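(* Consider the one-cell system and a single particle in it (apart from particles injected from the baths). Let $\gamma$ be an admissible path and assume the particle starts at time $0$ from $\gamma(0)$ with velocity $v_0\neq0$ directed in the positive direction along $\gamma$ (i.e. along its first segment). Then, whatever the initial angular velocity of the disk, there exists a sequence of particles injected from the baths (drivers), each of which hits the disk once and leaves the cell again, such that the particle follows $\gamma$ to its end in a finite time. In particular, if $\gamma(1)\in\partial\Gamma_{\rm L}\cup\partial\Gamma_{\rm R}$, the particle leaves the cell in finite time.
   Context: Cell geometry. Let $\Gamma_{\rm box}\subset\mathbb{R}^2$ be a bounded connected closed domain such that $(x,y)\in\Gamma_{\rm box}$ implies $x\in[0,L]$. Its boundary is $\partial\Gamma_{\rm box}=\partial\Gamma_{\rm L}\cup\partial\Gamma_{\rm R}\cup\bigcup_{k=1}^b\partial\Gamma_k$, where $\partial\Gamma_{\rm L}=\{(0,y):y\in[-a,a]\}$ and $\partial\Gamma_{\rm R}=\{(L,y):y\in[-a,a]\}$ are the two "openings" ($a>0$), and each $\partial\Gamma_k$ is an arc of a circle $C_k$ with center $c_k$, the arcs being oriented so that $\partial\Gamma_{\rm box}$ is everywhere dispersing. In the interior of $\Gamma_{\rm box}$ lies a closed disk $D$ of center $c=(L/2,0)$ and radius $r$ with $\partial D\cap\partial\Gamma_{\rm box}=\emptyset$, and for every $z\in\partial\Gamma_{\rm box}$ the segment $[c,z]$ meets $\partial\Gamma_{\rm box}$ only at $z$. The cell is $\Gamma=\Gamma_{\rm box}\setminus D$; its corners $\partial\Gamma^*$ are the points where two boundary pieces meet.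 Dynamics. Particles move in straight lines inside $\Gamma$ and do not interact with each other. The disk has angular position $\phi$ and angular velocity $\omega$, $\dot\phi=\omega$. At $q\in\partial\Gamma$ write $v=v^{\rm n}e_{\rm n}+v^{\rm t}e_{\rm t}$ (outward normal, tangent). Rules: at the openings the particle leaves the cell; on $\partial\Gamma_{\rm box}\setminus(\partial\Gamma_{\rm L}\cup\partial\Gamma_{\rm R})$, $(v^{\rm n})'=-v^{\rm n}$, $(v^{\rm t})'=v^{\rm t}$; on $\partial D$, $(v^{\rm n})'=-v^{\rm n}$, $(v^{\rm t})'=\omega$, $\omega'=v^{\rm t}$. Heat baths. Particles may be injected at any time through $\partial\Gamma_{\rm L}$ or $\partial\Gamma_{\rm R}$ at any point and with any inward-pointing velocity. Admissible path. A curve $\gamma:[0,1]\to\Gamma$, continuous and piecewise differentiable on $(0,1)$, is admissible if: (1) it consists of finitely many straight segments meeting at $\partial\Gamma$; (2) at each meeting point on $\partial\Gamma_{\rm box}$ the incoming and outgoing angles are equal (specular reflection); (3) only $\gamma(0)$ and $\gamma(1)$ may lie in $\partial\Gamma_{\rm L}\cup\partial\Gamma_{\rm R}$; (4) $\gamma$ never meets a corner of $\partial\Gamma^*$; (5) $\gamma$ is nowhere tangent to $\partial D$. No reflection law is required at meeting points on $\partial D$. *)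

theory Defs
  imports "HOL-Analysis.Analysis"
begin

type_synonym pt = "real \<times> real"

text \<open>Data of a cell: width L, half-height a of the openings, radius r of the
rotating disk, number b of circular boundary arcs, the closed domain
Gamma_box, the arcs (indexed 1..b), and centres/radii of the supporting
circles C_k.\<close>

record cellgeom =
  Lw   :: real
  aw   :: real
  rd   :: real
  nb   :: nat
  box  :: "pt set"
  arc  :: "nat \<Rightarrow> pt set"
  ctr  :: "nat \<Rightarrow> pt"
  crad :: "nat \<Rightarrow> real"

definition openL :: "cellgeom \<Rightarrow> pt set" where
  "openL G = {(0, y) | y. - aw G \<le> y \<and> y \<le> aw G}"

definition openR :: "cellgeom \<Rightarrow> pt set" where
  "openR G = {(Lw G, y) | y. - aw G \<le> y \<and> y \<le> aw G}"

definition openings :: "cellgeom \<Rightarrow> pt set" where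
  "openings G = openL G \<union> openR G"

definition dctr :: "cellgeom \<Rightarrow> pt" where
  "dctr G = (Lw G / 2, 0)"

text \<open>The cell Gamma = Gamma_box minus the disk; the boundary circle of D is kept,
since particles collide with it.\<close>
definition cell :: "cellgeom \<Rightarrow> pt set" where
  "cell G = box G - ball (dctr G) (rd G)"

definition piece :: "cellgeom \<Rightarrow> nat \<Rightarrow> pt set" where
  "piece G k = (if k = 0 then openL G else if k = Suc (nb G) then openR G else arc G k)"

text \<open>Corners: points where two (distinct) boundary pieces meet.  (The disk
boundary is disjoint from the other pieces, so it contributes no corners.)\<close>
definition corners :: "cellgeom \<Rightarrow> pt set" where
  "corners G = {q. \<exists>i j. i \<le> Suc (nb G) \<and> j \<le> Suc (nb G) \<and> i \<noteq> j \<and>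
                         q \<in> piece G i \<and> q \<in> piece G j}"

definition cell_geometry :: "cellgeom \<Rightarrow> bool" where
  "cell_geometry G \<longleftrightarrow>
     Lw G > 0 \<and> aw G > 0 \<and> rd G > 0 \<and>
     bounded (box G) \<and> closed (box G) \<and> connected (box G) \<and>
     (\<forall>x y. (x, y) \<in> box G \<longrightarrow> 0 \<le> x \<and> x \<le> Lw G) \<and>
     frontier (box G) = openL G \<union> openR G \<union> (\<Union>k\<in>{1..nb G}. arc G k) \<and>
     (\<forall>k\<in>{1..nb G}.
        crad G k > 0 \<and> arc G k \<subseteq> sphere (ctr G k) (crad G k) \<and>
        compact (arc G k) \<and> connected (arc G k) \<and> infinite (arc G k) \<and>
        \<comment> \<open>dispersing: near the arc, Gamma_box lies outside the circle C_k\<close>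
        (\<forall>q\<in>arc G k. \<exists>e>0. ball q e \<inter> box G \<inter> ball (ctr G k) (crad G k) = {})) \<and>
     cball (dctr G) (rd G) \<subseteq> interior (box G) \<and>
     (\<forall>z\<in>frontier (box G). closed_segment (dctr G) z \<inter> frontier (box G) = {z})"

definition reflect :: "pt \<Rightarrow> pt \<Rightarrow> pt" where
  "reflect n u = u - (2 * (u \<bullet> n)) *\<^sub>R n"

definition admissible_path :: "cellgeom \<Rightarrow> (real \<Rightarrow> pt) \<Rightarrow> nat \<Rightarrow> (nat \<Rightarrow> real) \<Rightarrow> bool" where
  "admissible_path G \<gamma> m s \<longleftrightarrow>
     m \<ge> 1 \<and> s 0 = 0 \<and> s m = 1 \<and> (\<forall>i<m. s i < s (Suc i)) \<and>
     continuous_on {0..1} \<gamma> \<and> \<gamma> ` {0..1} \<subseteq> cell G \<and>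
     \<comment> \<open>(1) finitely many straight segments\<close>
     (\<forall>i<m. \<gamma> (s i) \<noteq> \<gamma> (s (Suc i)) \<and>
        \<gamma> differentiable_on {s i<..<s (Suc i)} \<and>
        (\<exists>lam. continuous_on {s i..s (Suc i)} lam \<and> strict_mono_on {s i..s (Suc i)} lam \<and>
             lam (s i) = 0 \<and> lam (s (Suc i)) = 1 \<and>
             (\<forall>t\<in>{s i..s (Suc i)}.
                \<gamma> t = (1 - lam t) *\<^sub>R \<gamma> (s i) + lam t *\<^sub>R \<gamma> (s (Suc i))))) \<and>
     \<comment> \<open>(1) the segments meet at the boundary of Gamma\<close>
     (\<forall>i. 0 < i \<and> i < m \<longrightarrow> \<gamma> (s i) \<in> frontier (box G) \<union> sphere (dctr G) (rd G)) \<and>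
     \<comment> \<open>(2) specular reflection at meeting points on the boundary of Gamma_box\<close>
     (\<forall>i k. 0 < i \<and> i < m \<and> k \<in> {1..nb G} \<and> \<gamma> (s i) \<in> arc G k \<longrightarrow>
        sgn (\<gamma> (s (Suc i)) - \<gamma> (s i)) =
        reflect ((1 / crad G k) *\<^sub>R (\<gamma> (s i) - ctr G k)) (sgn (\<gamma> (s i) - \<gamma> (s (i - 1))))) \<and>
     \<comment> \<open>(3) only the endpoints may lie in the openings\<close>
     (\<forall>t\<in>{0<..<1}. \<gamma> t \<notin> openings G) \<and>
     \<comment> \<open>(4) no corners\<close>
     (\<forall>t\<in>{0..1}. \<gamma> t \<notin> corners G) \<and>
     \<comment> \<open>(5) nowhere tangent to the boundary of D\<close>
     (\<forall>i<m. \<forall>t\<in>{s i..s (Suc i)}. \<gamma> t \<in> sphere (dctr G) (rd G) \<longrightarrow>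
        (\<gamma> (s (Suc i)) - \<gamma> (s i)) \<bullet> (\<gamma> t - dctr G) \<noteq> 0)"

text \<open>A particle trajectory: it is present in the cell during [t_in, t_out];
pos/vel are position and (right-continuous) velocity; jumps is the finite set
of collision times, djumps those which are collisions with the disk.\<close>

record ptraj =
  t_in   :: real
  t_out  :: real
  pos    :: "real \<Rightarrow> pt"
  vel    :: "real \<Rightarrow> pt"
  jumps  :: "real set"
  djumps :: "real set"

definition rot90 :: "pt \<Rightarrow> pt" where
  "rot90 w = (- snd w, fst w)"

text \<open>outward normal of Gamma at a point q of the disk boundary (points into D)
and the tangent vector (counterclockwise direction of rotation of the disk)\<close>
definition disk_en :: "cellgeom \<Rightarrow> pt \<Rightarrow> pt" where
  "disk_en G q = (1 / rd G) *\<^sub>R (dctr G - q)"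

definition disk_et :: "cellgeom \<Rightarrow> pt \<Rightarrow> pt" where
  "disk_et G q = rot90 ((1 / rd G) *\<^sub>R (q - dctr G))"

definition left_val :: "(real \<Rightarrow> 'a) \<Rightarrow> real \<Rightarrow> 'a \<Rightarrow> bool" where
  "left_val f \<tau> w \<longleftrightarrow> (\<exists>e>0. \<forall>u\<in>{\<tau> - e<..<\<tau>}. f u = w)"

definition wall_rule :: "cellgeom \<Rightarrow> pt \<Rightarrow> pt \<Rightarrow> pt \<Rightarrow> bool" where
  "wall_rule G q vm vp \<longleftrightarrow>
     q \<notin> corners G \<and>
     (\<exists>k\<in>{1..nb G}. q \<in> arc G k \<and>
        (let n = (1 / crad G k) *\<^sub>R (ctr G k - q) in vm \<bullet> n > 0 \<and> vp = reflect n vm))"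

definition disk_rule :: "cellgeom \<Rightarrow> pt \<Rightarrow> pt \<Rightarrow> pt \<Rightarrow> real \<Rightarrow> real \<Rightarrow> bool" where
  "disk_rule G q vm vp wm wp \<longleftrightarrow>
     q \<in> sphere (dctr G) (rd G) \<and>
     vm \<bullet> disk_en G q > 0 \<and>
     vp = (- (vm \<bullet> disk_en G q)) *\<^sub>R disk_en G q + wm *\<^sub>R disk_et G q \<and>
     wp = vm \<bullet> disk_et G q"

definition traj_ok :: "cellgeom \<Rightarrow> real \<Rightarrow> (real \<Rightarrow> real) \<Rightarrow> ptraj \<Rightarrow> bool" where
  "traj_ok G T \<omega> P \<longleftrightarrow>
     0 \<le> t_in P \<and> t_in P \<le> t_out P \<and> t_out P \<le> T \<and>
     finite (jumps P) \<and> jumps P \<subseteq> {t_in P<..<t_out P} \<and> djumps P \<subseteq> jumps P \<and>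
     (\<forall>t\<in>{t_in P..t_out P}. pos P t \<in> cell G) \<and>
     \<comment> \<open>free flight between collisions\<close>
     (\<forall>s t. t_in P \<le> s \<and> s \<le> t \<and> t \<le> t_out P \<and> jumps P \<inter> {s<..<t} = {} \<longrightarrow>
        pos P t = pos P s + (t - s) *\<^sub>R vel P s) \<and>
     (\<forall>s t. t_in P \<le> s \<and> s \<le> t \<and> t < t_out P \<and> jumps P \<inter> {s<..t} = {} \<longrightarrow>
        vel P t = vel P s) \<and>
     \<comment> \<open>collisions\<close>
     (\<forall>\<tau>\<in>jumps P - djumps P. \<exists>vm. left_val (vel P) \<tau> vm \<and>
        wall_rule G (pos P \<tau>) vm (vel P \<tau>)) \<and>
     (\<forall>\<tau>\<in>djumps P. \<exists>vm wm. left_val (vel P) \<tau> vm \<and> left_val \<omega> \<tau> wm \<and>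
        disk_rule G (pos P \<tau>) vm (vel P \<tau>) wm (\<omega> \<tau>)) \<and>
     \<comment> \<open>leaving the cell through an opening\<close>
     (t_out P < T \<longrightarrow> t_in P < t_out P \<and>
        (\<exists>vm. left_val (vel P) (t_out P) vm \<and>
           ((pos P (t_out P) \<in> openL G \<and> fst vm < 0) \<or>
            (pos P (t_out P) \<in> openR G \<and> fst vm > 0))))"

definition injected :: "cellgeom \<Rightarrow> ptraj \<Rightarrow> bool" where
  "injected G P \<longleftrightarrow>
     (pos P (t_in P) \<in> openL G \<and> fst (vel P (t_in P)) > 0) \<or>
     (pos P (t_in P) \<in> openR G \<and> fst (vel P (t_in P)) < 0)"

definition driver :: "cellgeom \<Rightarrow> real \<Rightarrow> ptraj \<Rightarrow> bool" where
  "driver G T P \<longleftrightarrow> injected G P \<and> card (djumps P) = 1 \<and> t_out P < T"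

definition evolution ::
  "cellgeom \<Rightarrow> real \<Rightarrow> (real \<Rightarrow> real) \<Rightarrow> ptraj \<Rightarrow> ptraj list \<Rightarrow> bool" where
  "evolution G T \<omega> P0 Ds \<longleftrightarrow>
     traj_ok G T \<omega> P0 \<and> (\<forall>D\<in>set Ds. traj_ok G T \<omega> D \<and> injected G D) \<and>
     (let Ps = P0 # Ds in
        (\<forall>i<length Ps. \<forall>j<length Ps. i \<noteq> j \<longrightarrow> djumps (Ps ! i) \<inter> djumps (Ps ! j) = {}) \<and>
        (\<forall>s t. 0 \<le> s \<and> s \<le> t \<and> t \<le> T \<and>
           (\<Union>P\<in>set Ps. djumps P) \<inter> {s<..t} = {} \<longrightarrow> \<omega> t = \<omega> s))"

definition follows :: "ptraj \<Rightarrow> (real \<Rightarrow> pt) \<Rightarrow> real \<Rightarrow> bool" where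
  "follows P \<gamma> Tf \<longleftrightarrow>
     0 \<le> Tf \<and> Tf \<le> t_out P \<and>
     (\<exists>\<sigma>. continuous_on {0..Tf} \<sigma> \<and> mono_on {0..Tf} \<sigma> \<and> \<sigma> 0 = 0 \<and> \<sigma> Tf = 1 \<and>
          (\<forall>t\<in>{0..Tf}. pos P t = \<gamma> (\<sigma> t)))"

end

theory Submission imports Defs begin

text \<open>The particle is sent along \<open>\<gamma>\<close> with piecewise constant velocity, a positive
multiple of the current edge.  At a vertex on a wall the reflection law required of \<open>\<gamma>\<close> is
the billiard law, so the particle follows \<open>\<gamma>\<close> by itself.  At a vertex on the disk the
outgoing velocity has the reversed normal component of the incoming one and, as tangential
component, the angular velocity of the disk just before the collision; a positive multiple
of the next edge is obtained if that angular velocity has been set to the right value.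
This is done by drivers: a particle injected through the left opening, aimed at the leftmost
point of the disk, leaves the disk spinning at any prescribed rate (its own tangential
velocity) and itself returns through the left opening.  One driver is sent between any two
consecutive vertex times.  Finally, if \<open>\<gamma>\<close> ends in an opening, its last edge is not vertical
(otherwise it would run inside the boundary of the box and its end point would be a
corner), so the particle leaves the cell.\<close>

lemma continuous_strict_mono_inverse:
  fixes f :: "real \<Rightarrow> real"
  assumes cont: "continuous_on {a..b} f" and sm: "strict_mono_on {a..b} f" and "a \<le> b"
  shows "\<exists>g. continuous_on {f a..f b} g \<and> mono_on {f a..f b} g \<and>
             (\<forall>y\<in>{f a..f b}. g y \<in> {a..b} \<and> f (g y) = y) \<and> g (f a) = a \<and> g (f b) = b"
proof -
  have img: "f ` {a..b} = {f a..f b}"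
  proof
    show "f ` {a..b} \<subseteq> {f a..f b}"
      using \<open>a \<le> b\<close> by (auto intro!: strict_mono_on_leD[OF sm])
    show "{f a..f b} \<subseteq> f ` {a..b}"
      using IVT'[of f a _ b] cont \<open>a \<le> b\<close> by (force simp: image_iff)
  qed
  define g where "g = inv_into {a..b} f"
  have "inj_on f {a..b}" using sm by (rule strict_mono_on_imp_inj_on)
  then have left_inv: "\<forall>x\<in>{a..b}. g (f x) = x" by (simp add: g_def)
  have right_inv: "\<forall>y\<in>{f a..f b}. g y \<in> {a..b} \<and> f (g y) = y"
    unfolding g_def img[symmetric] by (meson inv_into_into f_inv_into_f)
  have "mono_on {f a..f b} g"
  proof (rule mono_onI)
    fix x y assume "x \<in> {f a..f b}" "y \<in> {f a..f b}" "x \<le> y"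
    then show "g x \<le> g y"
      using right_inv strict_mono_onD[OF sm, of "g y" "g x"] by (metis linorder_not_le order.asym)
  qed
  moreover have "continuous_on {f a..f b} g"
    using continuous_on_inv[OF cont compact_Icc left_inv] img by simp
  ultimately show ?thesis using right_inv left_inv \<open>a \<le> b\<close> by auto
qed

lemma card_le_strict_mono_eq:
  fixes f :: "nat \<Rightarrow> 'a::linorder"
  assumes sm: "strict_mono f" and k: "k < m"
    and lo: "k = 0 \<or> f k \<le> t" and hi: "Suc k = m \<or> t < f (Suc k)"
  shows "card {j\<in>{1..<m}. f j \<le> t} = k"
proof -
  have "{j\<in>{1..<m}. f j \<le> t} = {1..k}"
  proof (intro equalityI subsetI)
    fix j assume j: "j \<in> {j\<in>{1..<m}. f j \<le> t}"
    have "j \<le> k"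
    proof (rule ccontr)
      assume "\<not> j \<le> k"
      then have "f (Suc k) \<le> f j" "Suc k \<noteq> m" using sm j by (auto simp: strict_mono_less_eq)
      then show False using hi j by auto
    qed
    then show "j \<in> {1..k}" using j by auto
  next
    fix j assume j: "j \<in> {1..k}"
    then have "f j \<le> f k" using sm by (simp add: strict_mono_less_eq)
    then show "j \<in> {j\<in>{1..<m}. f j \<le> t}" using j lo k by auto
  qed
  then show ?thesis by simp
qed

lemma sphere_step_into_ball:
  fixes q c u :: "'a::real_inner"
  assumes dq: "dist c q = r" and out: "u \<bullet> (q - c) > 0" and e: "e > 0"
  shows "\<exists>h. 0 < h \<and> h \<le> 1 \<and> h * norm u < e \<and> q - h *\<^sub>R u \<in> ball c r"
proof -
  let ?D = "u \<bullet> (q - c)"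
  have nu: "norm u > 0" using out by auto
  define h where "h = min 1 (min (?D / (norm u)\<^sup>2) (e / (2 * norm u)))"
  have hpos: "h > 0" and h1: "h \<le> 1" using out nu e by (simp_all add: h_def)
  have h2: "h * (norm u)\<^sup>2 \<le> ?D"
    using nu by (simp add: h_def pos_le_divide_eq[symmetric])
  have h3: "h * norm u < e"
  proof -
    have "h \<le> e / (2 * norm u)" by (simp add: h_def)
    then have "h * norm u \<le> e / 2" using nu by (simp add: pos_le_divide_eq field_simps)
    then show ?thesis using e by simp
  qed
  have "(norm ((q - c) - h *\<^sub>R u))\<^sup>2 = (norm (q - c))\<^sup>2 - 2 * h * ?D + h * (h * (norm u)\<^sup>2)"
    by (simp add: power2_norm_eq_inner inner_diff_left inner_diff_right inner_commute algebra_simps)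
  also have "\<dots> \<le> (norm (q - c))\<^sup>2 - 2 * h * ?D + h * ?D"
    using h2 hpos by (simp add: mult_left_mono)
  also have "\<dots> < (norm (q - c))\<^sup>2" using hpos out by simp
  finally have "norm ((q - c) - h *\<^sub>R u) < norm (q - c)"
    by (rule power2_less_imp_less) simp
  then have "q - h *\<^sub>R u \<in> ball c r"
    using dq by (simp add: dist_norm norm_minus_commute algebra_simps)
  then show ?thesis using hpos h1 h3 by blast
qed

lemma ray_avoiding_ball:
  fixes q c u :: "'a::real_inner"
  assumes dq: "dist c q = r" and e: "e > 0"
    and ray: "\<And>h. 0 < h \<Longrightarrow> h \<le> 1 \<Longrightarrow> q + h *\<^sub>R u \<in> S"
    and avoid: "S \<inter> ball q e \<inter> ball c r = {}"
  shows "u \<bullet> (q - c) \<ge> 0"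
proof (rule ccontr)
  assume "\<not> u \<bullet> (q - c) \<ge> 0"
  then have "(- u) \<bullet> (q - c) > 0" by simp
  from sphere_step_into_ball[OF dq this e]
  obtain h where "0 < h" "h \<le> 1" "h * norm u < e" "q + h *\<^sub>R u \<in> ball c r"
    by auto
  moreover from this have "q + h *\<^sub>R u \<in> ball q e" by (simp add: dist_norm)
  ultimately show False using ray avoid by blast
qed

lemma reflect_scaleR: "reflect n (a *\<^sub>R u) = a *\<^sub>R reflect n u"
  by (simp add: reflect_def algebra_simps)

lemma reflect_uminus_normal: "reflect (- n) u = reflect n u"
  by (simp add: reflect_def)

lemma disk_en_eq: "disk_en G q = - ((1 / rd G) *\<^sub>R (q - dctr G))"
  by (simp add: disk_en_def algebra_simps)

lemma disk_frame_decomp: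
  assumes "dist (dctr G) q = rd G" "rd G > 0"
  shows "x = (x \<bullet> disk_en G q) *\<^sub>R disk_en G q + (x \<bullet> disk_et G q) *\<^sub>R disk_et G q"
proof -
  obtain c1 c2 where c: "dctr G = (c1, c2)" by (cases "dctr G")
  obtain q1 q2 where q: "q = (q1, q2)" by (cases q)
  obtain x1 x2 where x: "x = (x1, x2)" by (cases x)
  define a where "a = (c1 - q1) / rd G"
  define b where "b = (c2 - q2) / rd G"
  have "sqrt ((c1 - q1)\<^sup>2 + (c2 - q2)\<^sup>2) = rd G"
    using assms by (simp add: c q dist_Pair_Pair dist_real_def)
  then have "(c1 - q1)\<^sup>2 + (c2 - q2)\<^sup>2 = (rd G)\<^sup>2"
    by (metis real_sqrt_pow2 add_nonneg_nonneg zero_le_power2)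
  then have ab: "a\<^sup>2 + b\<^sup>2 = 1"
    using assms(2) by (simp add: a_def b_def power_divide add_divide_distrib[symmetric])
  have en: "disk_en G q = (a, b)" by (simp add: disk_en_def c q a_def b_def)
  have et: "disk_et G q = (b, - a)"
    using assms(2) by (simp add: disk_et_def rot90_def c q a_def b_def field_simps)
  have "(x1 * a + x2 * b) * a + (x1 * b - x2 * a) * b = x1 * (a\<^sup>2 + b\<^sup>2)"
    "(x1 * a + x2 * b) * b - (x1 * b - x2 * a) * a = x2 * (a\<^sup>2 + b\<^sup>2)"
    by (simp_all add: power2_eq_square algebra_simps)
  then have "x1 = (x1 * a + x2 * b) * a + (x1 * b - x2 * a) * b"
    "x2 = (x1 * a + x2 * b) * b - (x1 * b - x2 * a) * a"
    using ab by simp_all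
  then show ?thesis unfolding en et x by (simp add: inner_Pair)
qed

section \<open>Cell geometry\<close>

lemma cell_geometry_dims:
  assumes "cell_geometry G"
  shows "Lw G > 0" "aw G > 0" "rd G > 0"
  using assms unfolding cell_geometry_def by simp_all

lemma box_x_range:
  assumes "cell_geometry G" "(x, y) \<in> box G"
  shows "0 \<le> x \<and> x \<le> Lw G"
proof -
  have "\<forall>x y. (x, y) \<in> box G \<longrightarrow> 0 \<le> x \<and> x \<le> Lw G"
    using assms(1) unfolding cell_geometry_def by (elim conjE) assumption
  then show ?thesis using assms(2) by blast
qed

lemma frontier_box_subset:
  assumes "cell_geometry G"
  shows "frontier (box G) \<subseteq> box G"
proof -
  have "closed (box G)" using assms unfolding cell_geometry_def by (elim conjE) assumption
  then show ?thesis by (rule frontier_subset_closed)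
qed

lemma frontier_box_eq:
  assumes "cell_geometry G"
  shows "frontier (box G) = openL G \<union> openR G \<union> (\<Union>k\<in>{1..nb G}. arc G k)"
  using assms unfolding cell_geometry_def by (elim conjE) assumption

lemma arc_props:
  assumes "cell_geometry G" "k \<in> {1..nb G}"
  shows "crad G k > 0" "arc G k \<subseteq> sphere (ctr G k) (crad G k)" "compact (arc G k)"
    "\<forall>q\<in>arc G k. \<exists>e>0. ball q e \<inter> box G \<inter> ball (ctr G k) (crad G k) = {}"
proof -
  have "\<forall>k\<in>{1..nb G}.
        crad G k > 0 \<and> arc G k \<subseteq> sphere (ctr G k) (crad G k) \<and>
        compact (arc G k) \<and> connected (arc G k) \<and> infinite (arc G k) \<and>
        (\<forall>q\<in>arc G k. \<exists>e>0. ball q e \<inter> box G \<inter> ball (ctr G k) (crad G k) = {})"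
    using assms(1) unfolding cell_geometry_def by (elim conjE) assumption
  then show "crad G k > 0" "arc G k \<subseteq> sphere (ctr G k) (crad G k)" "compact (arc G k)"
    "\<forall>q\<in>arc G k. \<exists>e>0. ball q e \<inter> box G \<inter> ball (ctr G k) (crad G k) = {}"
    using assms(2) by auto
qed

lemma disk_in_interior_box:
  assumes "cell_geometry G"
  shows "cball (dctr G) (rd G) \<subseteq> interior (box G)"
  using assms unfolding cell_geometry_def by (elim conjE) assumption

lemma cell_subset_box: "cell G \<subseteq> box G"
  by (auto simp: cell_def)

lemma side_not_interior_box:
  assumes cg: "cell_geometry G" and side: "fst p = 0 \<or> fst p = Lw G"
  shows "p \<notin> interior (box G)"
proof
  obtain x y where p: "p = (x, y)" by (cases p)
  assume "p \<in> interior (box G)"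
  then obtain e where e: "e > 0" "ball p e \<subseteq> box G" by (meson mem_interior)
  define x' where "x' = (if x = 0 then - (e / 2) else x + e / 2)"
  have "(x', y) \<in> box G"
    using e side by (intro subsetD[OF e(2)]) (auto simp: p x'_def dist_Pair_Pair dist_real_def)
  then show False
    using box_x_range[OF cg, of x' y] side e by (auto simp: p x'_def split: if_splits)
qed

lemma opening_on_arc_is_corner:
  assumes "q \<in> openings G" and k: "k \<in> {1..nb G}" "q \<in> arc G k"
  shows "q \<in> corners G"
proof -
  have pk: "q \<in> piece G k" using k by (auto simp: piece_def)
  show ?thesis
  proof (cases "q \<in> openL G")
    case True
    then have "q \<in> piece G 0" by (simp add: piece_def)
    then show ?thesis
      unfolding corners_def using k pk by (intro CollectI exI[of _ 0] exI[of _ k]) auto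
  next
    case False
    then have "q \<in> piece G (Suc (nb G))" using assms(1) by (simp add: piece_def openings_def)
    then show ?thesis
      unfolding corners_def using k pk by (intro CollectI exI[of _ "Suc (nb G)"] exI[of _ k]) auto
  qed
qed

lemma segment_centre_frontier_in_box:
  assumes cg: "cell_geometry G" and z: "z \<in> frontier (box G)"
  shows "closed_segment (dctr G) z \<subseteq> box G"
proof
  let ?c = "dctr G"
  have "\<forall>z\<in>frontier (box G). closed_segment ?c z \<inter> frontier (box G) = {z}"
    using cg unfolding cell_geometry_def by (elim conjE) assumption
  then have star: "closed_segment ?c z \<inter> frontier (box G) = {z}" using z by blast
  have cin: "?c \<in> interior (box G)"
    using disk_in_interior_box[OF cg] cell_geometry_dims(3)[OF cg] by auto
  have zc: "z \<noteq> ?c" using cin z by (auto simp: frontier_def)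
  fix p assume p: "p \<in> closed_segment ?c z"
  then obtain u where u: "0 \<le> u" "u \<le> 1" "p = (1 - u) *\<^sub>R ?c + u *\<^sub>R z"
    by (auto simp: in_segment)
  show "p \<in> box G"
  proof (rule ccontr)
    assume pn: "p \<notin> box G"
    then have u1: "u < 1" using u z frontier_box_subset[OF cg] by (cases "u = 1") auto
    \<comment> \<open>The segment from the centre to \<open>p\<close> leaves the box, so it meets the frontier,
      necessarily at \<open>z\<close>; but \<open>z\<close> lies beyond \<open>p\<close>.\<close>
    have "closed_segment ?c p \<inter> frontier (box G) \<noteq> {}"
      using pn cin interior_subset
      by (intro connected_Int_frontier) (auto simp: ends_in_segment)
    then obtain w where w: "w \<in> closed_segment ?c p" "w \<in> frontier (box G)" by auto
    have "closed_segment ?c p \<subseteq> closed_segment ?c z"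
      using p by (simp add: subset_closed_segment)
    then have "w = z" using w star by auto
    then obtain v where v: "0 \<le> v" "v \<le> 1" "z = (1 - v) *\<^sub>R ?c + v *\<^sub>R p"
      using w by (auto simp: in_segment)
    have "z - ?c = (v * u) *\<^sub>R (z - ?c)"
      using v u by (simp add: algebra_simps)
    then have "(1 - v * u) *\<^sub>R (z - ?c) = 0" by (simp add: algebra_simps)
    then have "v * u = 1" using zc by simp
    moreover have "v * u \<le> u" using v u by (simp add: mult_left_le_one_le)
    ultimately show False using u1 by simp
  qed
qed

lemma leftmost_disk_point_pos:
  assumes cg: "cell_geometry G"
  shows "Lw G / 2 - rd G > 0"
proof -
  have "(Lw G / 2 - rd G, 0) \<in> interior (box G)"
    using disk_in_interior_box[OF cg] cell_geometry_dims[OF cg]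
    by (auto simp: dctr_def dist_Pair_Pair)
  then obtain e where e: "e > 0" "ball (Lw G / 2 - rd G, 0) e \<subseteq> box G"
    by (meson mem_interior)
  then have "(Lw G / 2 - rd G - e/2, 0) \<in> box G"
    by (auto simp: dist_Pair_Pair)
  then show ?thesis using box_x_range[OF cg] e by fastforce
qed

text \<open>The triangle with vertex at the leftmost point \<open>(x0, 0)\<close> of the disk and opposite
side the left opening lies in the cell: each of its points lies on a segment from the centre
of the disk to a point of the opening.\<close>

lemma left_cone_in_box:
  assumes cg: "cell_geometry G" and th: "0 \<le> \<theta>" "\<theta> \<le> 1" and y: "\<bar>y\<bar> \<le> aw G"
  shows "((1 - \<theta>) * (Lw G / 2 - rd G), \<theta> * y) \<in> box G"
proof -
  let ?L = "Lw G" and ?r = "rd G" and ?a = "aw G"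
  define x0 where "x0 = ?L / 2 - ?r"
  have x0: "x0 > 0" using leftmost_disk_point_pos[OF cg] by (simp add: x0_def)
  have L: "?L > 0" "?r > 0" "?a > 0" using cell_geometry_dims[OF cg] by auto
  define \<rho> where "\<rho> = 1 - (1 - \<theta>) * (2 * x0 / ?L)"
  have q: "2 * x0 / ?L = 1 - 2 * ?r / ?L" using L by (simp add: x0_def diff_divide_distrib)
  have rt: "\<rho> - \<theta> = (1 - \<theta>) * (2 * ?r / ?L)"
    unfolding \<rho>_def q by (simp add: algebra_simps)
  have rpos: "\<rho> > 0"
  proof (cases "\<theta> = 1")
    case False
    then have "(1 - \<theta>) * (2 * ?r / ?L) > 0" using th L by simp
    then show ?thesis using rt th by linarith
  qed (simp add: \<rho>_def)
  have "(1 - \<theta>) * (2 * ?r / ?L) \<ge> 0" using th L by simp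
  then have rge: "\<rho> \<ge> \<theta>" using rt by linarith
  have r1: "\<rho> \<le> 1" using th x0 L by (simp add: \<rho>_def)
  define y' where "y' = \<theta> * y / \<rho>"
  have "\<bar>\<theta> * y\<bar> \<le> \<rho> * ?a"
  proof -
    have "\<bar>\<theta> * y\<bar> \<le> \<theta> * ?a" using th y by (simp add: abs_mult mult_left_mono)
    also have "\<dots> \<le> \<rho> * ?a" using rge L by (simp add: mult_right_mono)
    finally show ?thesis .
  qed
  then have "\<bar>y'\<bar> \<le> ?a" using rpos
    by (simp add: y'_def abs_divide pos_divide_le_eq mult.commute)
  then have "(0, y') \<in> frontier (box G)"
    using frontier_box_eq[OF cg] by (auto simp: openL_def)
  moreover have "((1 - \<theta>) * x0, \<theta> * y) = (1 - \<rho>) *\<^sub>R dctr G + \<rho> *\<^sub>R (0, y')"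
    using L rpos by (simp add: \<rho>_def y'_def dctr_def prod_eq_iff)
  then have "((1 - \<theta>) * x0, \<theta> * y) \<in> closed_segment (dctr G) (0, y')"
    unfolding in_segment using rpos r1 by (intro exI[of _ \<rho>]) auto
  ultimately show ?thesis
    using segment_centre_frontier_in_box[OF cg] unfolding x0_def by blast
qed

lemma left_cone_in_cell:
  assumes cg: "cell_geometry G" and th: "0 \<le> \<theta>" "\<theta> \<le> 1" and y: "\<bar>y\<bar> \<le> aw G"
  shows "((1 - \<theta>) * (Lw G / 2 - rd G), \<theta> * y) \<in> cell G"
proof -
  let ?x = "(1 - \<theta>) * (Lw G / 2 - rd G)"
  have "0 \<le> ?x" "?x \<le> Lw G / 2 - rd G"
    using th leftmost_disk_point_pos[OF cg] by (simp_all add: mult_left_le_one_le)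
  then have "rd G \<le> \<bar>Lw G / 2 - ?x\<bar>" by linarith
  also have "\<dots> \<le> dist (dctr G) (?x, \<theta> * y)"
    unfolding dctr_def dist_Pair_Pair dist_real_def power2_abs by (rule real_sqrt_ge_abs1)
  finally show ?thesis
    using left_cone_in_box[OF assms] unfolding cell_def by auto
qed

section \<open>Drivers\<close>

text \<open>With \<open>x0 = L/2 - r\<close>, the driver enters through the left opening at \<open>(0, w/l)\<close> at time
\<open>\<delta> - 1/l\<close>, hits the leftmost point \<open>(x0, 0)\<close> of the disk at time \<open>\<delta>\<close>, and leaves through
the left opening at \<open>(0, - w'/l)\<close> at time \<open>\<delta> + 1/l\<close>.  Its tangential velocity before the
collision is \<open>w\<close>, which becomes the angular velocity of the disk, and it carries away the
previous angular velocity \<open>w'\<close>.\<close>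

definition kick_vel :: "cellgeom \<Rightarrow> real \<Rightarrow> real \<Rightarrow> real \<Rightarrow> real \<Rightarrow> real \<Rightarrow> pt" where
  "kick_vel G \<delta> l w w' t =
     (if t < \<delta> then (l * (Lw G / 2 - rd G), - w) else (- l * (Lw G / 2 - rd G), - w'))"

definition kick_driver :: "cellgeom \<Rightarrow> real \<Rightarrow> real \<Rightarrow> real \<Rightarrow> real \<Rightarrow> ptraj" where
  "kick_driver G \<delta> l w w' =
     \<lparr>t_in = \<delta> - 1 / l, t_out = \<delta> + 1 / l,
      pos = (\<lambda>t. (Lw G / 2 - rd G, 0) + (t - \<delta>) *\<^sub>R kick_vel G \<delta> l w w' t),
      vel = kick_vel G \<delta> l w w', jumps = {\<delta>}, djumps = {\<delta>}\<rparr>"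

lemma kick_driver_in_cell:
  assumes cg: "cell_geometry G" and l: "l > 0"
    and w: "\<bar>w\<bar> \<le> l * aw G" "\<bar>w'\<bar> \<le> l * aw G"
    and t: "\<delta> - 1 / l \<le> t" "t \<le> \<delta> + 1 / l"
  shows "pos (kick_driver G \<delta> l w w') t \<in> cell G"
proof -
  let ?x0 = "Lw G / 2 - rd G"
  have y: "\<bar>w / l\<bar> \<le> aw G" "\<bar>- w' / l\<bar> \<le> aw G"
    using w l by (simp_all add: abs_divide pos_divide_le_eq mult.commute)
  show ?thesis
  proof (cases "t < \<delta>")
    case True
    define \<theta> where "\<theta> = l * (\<delta> - t)"
    have "0 \<le> \<theta>" "\<theta> \<le> 1" using True t l by (auto simp: \<theta>_def field_simps)
    moreover have "pos (kick_driver G \<delta> l w w') t = ((1 - \<theta>) * ?x0, \<theta> * (w / l))"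
      using True l by (simp add: kick_driver_def kick_vel_def \<theta>_def algebra_simps)
    ultimately show ?thesis using left_cone_in_cell[OF cg _ _ y(1)] by simp
  next
    case False
    define \<theta> where "\<theta> = l * (t - \<delta>)"
    have "0 \<le> \<theta>" "\<theta> \<le> 1" using False t l by (auto simp: \<theta>_def field_simps)
    moreover have "pos (kick_driver G \<delta> l w w') t = ((1 - \<theta>) * ?x0, \<theta> * (- w' / l))"
      using False l by (simp add: kick_driver_def kick_vel_def \<theta>_def algebra_simps)
    ultimately show ?thesis using left_cone_in_cell[OF cg _ _ y(2)] by simp
  qed
qed

lemma kick_driver_collision:
  assumes cg: "cell_geometry G" and l: "l > 0"
  shows "disk_rule G (pos (kick_driver G \<delta> l w w') \<delta>) (kick_vel G \<delta> l w w' (\<delta> - 1))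
           (vel (kick_driver G \<delta> l w w') \<delta>) w' w"
proof -
  have r: "rd G > 0" using cell_geometry_dims[OF cg] by simp
  let ?q = "(Lw G / 2 - rd G, 0 :: real)"
  have "disk_en G ?q = (1, 0)" "disk_et G ?q = (0, -1)"
    using r by (simp_all add: disk_en_def disk_et_def rot90_def dctr_def)
  then show ?thesis
    using r l leftmost_disk_point_pos[OF cg]
    by (simp add: disk_rule_def kick_driver_def kick_vel_def dctr_def dist_Pair_Pair)
qed

lemma kick_driver_traj_ok:
  assumes cg: "cell_geometry G" and l: "l > 0"
    and w: "\<bar>w\<bar> \<le> l * aw G" "\<bar>w'\<bar> \<le> l * aw G"
    and \<delta>: "1 / l \<le> \<delta>" "\<delta> + 1 / l < T"
    and spin: "left_val \<omega> \<delta> w'" "\<omega> \<delta> = w"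
  shows "traj_ok G T \<omega> (kick_driver G \<delta> l w w')"
proof -
  define D where "D = kick_driver G \<delta> l w w'"
  let ?v = "kick_vel G \<delta> l w w'" and ?q = "(Lw G / 2 - rd G, 0 :: real)"
  have D: "t_in D = \<delta> - 1 / l" "t_out D = \<delta> + 1 / l" "pos D = (\<lambda>t. ?q + (t - \<delta>) *\<^sub>R ?v t)"
    "vel D = ?v" "jumps D = {\<delta>}" "djumps D = {\<delta>}"
    by (simp_all add: D_def kick_driver_def)
  have x0: "Lw G / 2 - rd G > 0" using leftmost_disk_point_pos[OF cg] .
  have lv: "left_val ?v \<delta> (?v (\<delta> - 1))" "left_val ?v (\<delta> + 1 / l) (?v \<delta>)"
    unfolding left_val_def using l
    by (auto intro!: exI[of _ "1"] exI[of _ "1 / l"] simp: kick_vel_def)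
  have free: "pos D t = pos D s + (t - s) *\<^sub>R vel D s" if "s \<le> t" "{\<delta>} \<inter> {s<..<t} = {}" for s t
  proof -
    have "?v t = ?v s \<or> t = \<delta>" using that by (auto simp: kick_vel_def)
    then show ?thesis by (auto simp: D algebra_simps)
  qed
  have vconst: "vel D t = vel D s" if "s \<le> t" "{\<delta>} \<inter> {s<..t} = {}" for s t
    using that by (auto simp: D kick_vel_def)
  have collision: "\<exists>vm wm. left_val (vel D) \<delta> vm \<and> left_val \<omega> \<delta> wm \<and>
          disk_rule G (pos D \<delta>) vm (vel D \<delta>) wm (\<omega> \<delta>)"
  proof -
    have "disk_rule G (pos D \<delta>) (?v (\<delta> - 1)) (vel D \<delta>) w' (\<omega> \<delta>)"
      using kick_driver_collision[OF cg l, of \<delta> w w'] spin(2) by (simp add: D_def)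
    then show ?thesis using lv(1) spin(1) unfolding D(4) by blast
  qed
  have "pos D (t_out D) = (0, - w' / l)" "\<bar>- w' / l\<bar> \<le> aw G"
    using w l by (simp_all add: D kick_vel_def abs_divide pos_divide_le_eq mult.commute)
  then have "pos D (t_out D) \<in> openL G" unfolding openL_def abs_le_iff by auto
  moreover have "fst (vel D \<delta>) < 0" using l x0 by (simp add: D kick_vel_def)
  ultimately have leave: "pos D (t_out D) \<in> openL G \<and> fst (vel D \<delta>) < 0" by blast
  have incell: "pos D t \<in> cell G" if "t \<in> {\<delta> - 1 / l..\<delta> + 1 / l}" for t
    using kick_driver_in_cell[OF cg l w] that by (simp add: D_def kick_driver_def)
  show ?thesis
    unfolding D_def[symmetric] traj_ok_def D(1,2,5,6)
  proof (intro conjI)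
    show "0 \<le> \<delta> - 1 / l" "\<delta> - 1 / l \<le> \<delta> + 1 / l" "\<delta> + 1 / l \<le> T" "finite {\<delta>}"
      "{\<delta>} \<subseteq> {\<delta> - 1 / l<..<\<delta> + 1 / l}" "{\<delta>} \<subseteq> {\<delta>}"
      using l \<delta> by auto
  next
    show "\<forall>\<tau>\<in>{\<delta>} - {\<delta>}.
        \<exists>vm. left_val (vel D) \<tau> vm \<and> wall_rule G (pos D \<tau>) vm (vel D \<tau>)"
      by simp
    show "\<forall>\<tau>\<in>{\<delta>}. \<exists>vm wm. left_val (vel D) \<tau> vm \<and> left_val \<omega> \<tau> wm \<and>
        disk_rule G (pos D \<tau>) vm (vel D \<tau>) wm (\<omega> \<tau>)"
      using collision by simp
    show "\<delta> + 1 / l < T \<longrightarrow> \<delta> - 1 / l < \<delta> + 1 / l \<and>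
      (\<exists>vm. left_val (vel D) (\<delta> + 1 / l) vm \<and>
        (pos D (\<delta> + 1 / l) \<in> openL G \<and> fst vm < 0 \<or> pos D (\<delta> + 1 / l) \<in> openR G \<and> 0 < fst vm))"
      using l lv(2) leave unfolding D(2,4) by (intro impI conjI exI[of _ "?v \<delta>"]) auto
  qed (use incell free vconst in blast)+
qed

lemma kick_driver_driver:
  assumes cg: "cell_geometry G" and l: "l > 0"
    and w: "\<bar>w\<bar> \<le> l * aw G" and \<delta>: "\<delta> + 1 / l < T"
  shows "driver G T (kick_driver G \<delta> l w w')"
proof -
  have "pos (kick_driver G \<delta> l w w') (\<delta> - 1 / l) = (0, w / l)"
    using l by (simp add: kick_driver_def kick_vel_def)
  moreover have "\<bar>w / l\<bar> \<le> aw G"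
    using w l by (simp add: abs_divide pos_divide_le_eq mult.commute)
  ultimately have "pos (kick_driver G \<delta> l w w') (\<delta> - 1 / l) \<in> openL G"
    unfolding openL_def abs_le_iff by auto
  moreover have "fst (vel (kick_driver G \<delta> l w w') (\<delta> - 1 / l)) > 0"
    using l leftmost_disk_point_pos[OF cg] by (simp add: kick_driver_def kick_vel_def)
  ultimately show ?thesis
    using \<delta> by (simp add: driver_def injected_def kick_driver_def)
qed

lemma driver_exists:
  assumes cg: "cell_geometry G" and \<delta>: "0 < \<delta>" "\<delta> < T"
    and spin: "left_val \<omega> \<delta> w'" "\<omega> \<delta> = w"
  shows "\<exists>D. traj_ok G T \<omega> D \<and> driver G T D \<and> djumps D = {\<delta>}"
proof -
  have a: "aw G > 0" using cell_geometry_dims[OF cg] by simp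
  define l where "l = (\<bar>w\<bar> + \<bar>w'\<bar>) / aw G + 1 / \<delta> + 1 / (T - \<delta>)"
  have parts: "(\<bar>w\<bar> + \<bar>w'\<bar>) / aw G \<ge> 0" "1 / \<delta> > 0" "1 / (T - \<delta>) > 0"
    using a \<delta> by auto
  then have l: "l > 0" unfolding l_def by linarith
  have "l \<ge> (\<bar>w\<bar> + \<bar>w'\<bar>) / aw G" unfolding l_def using parts by linarith
  then have w: "\<bar>w\<bar> \<le> l * aw G" "\<bar>w'\<bar> \<le> l * aw G" using a by (simp_all add: field_simps)
  have "l > 1 / \<delta>" "l > 1 / (T - \<delta>)" unfolding l_def using parts by linarith+
  then have "1 / l < \<delta>" "1 / l < T - \<delta>" using l \<delta> by (simp_all add: field_simps)
  then have "1 / l \<le> \<delta>" "\<delta> + 1 / l < T" by simp_all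
  then show ?thesis
    using kick_driver_traj_ok[OF cg l w _ _ spin] kick_driver_driver[OF cg l w(1)]
    by (force simp: kick_driver_def)
qed

section \<open>Steering the particle along the path\<close>

locale driven_path =
  fixes G :: cellgeom and \<gamma> :: "real \<Rightarrow> pt" and m :: nat and s :: "nat \<Rightarrow> real"
    and \<mu> :: real and \<omega>0 :: real
  assumes cg: "cell_geometry G" and ap: "admissible_path G \<gamma> m s" and mupos: "\<mu> > 0"
begin

lemma m_ge_1: "m \<ge> 1"
  using ap unfolding admissible_path_def by (elim conjE) assumption

lemma s_first: "s 0 = 0"
  using ap unfolding admissible_path_def by (elim conjE) assumption

lemma s_last: "s m = 1"
  using ap unfolding admissible_path_def by (elim conjE) assumption

lemma s_less_Suc: "\<forall>i<m. s i < s (Suc i)"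
  using ap unfolding admissible_path_def by (elim conjE) assumption

lemma path_in_cell: "\<gamma> ` {0..1} \<subseteq> cell G"
  using ap unfolding admissible_path_def by (elim conjE) assumption

lemma path_segments: "\<forall>i<m. \<gamma> (s i) \<noteq> \<gamma> (s (Suc i)) \<and>
        \<gamma> differentiable_on {s i<..<s (Suc i)} \<and>
        (\<exists>lam. continuous_on {s i..s (Suc i)} lam \<and> strict_mono_on {s i..s (Suc i)} lam \<and>
             lam (s i) = 0 \<and> lam (s (Suc i)) = 1 \<and>
             (\<forall>t\<in>{s i..s (Suc i)}.
                \<gamma> t = (1 - lam t) *\<^sub>R \<gamma> (s i) + lam t *\<^sub>R \<gamma> (s (Suc i))))"
  using ap unfolding admissible_path_def by (elim conjE) assumption

lemma inner_breaks_on_boundary: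
  "\<forall>i. 0 < i \<and> i < m \<longrightarrow> \<gamma> (s i) \<in> frontier (box G) \<union> sphere (dctr G) (rd G)"
  using ap unfolding admissible_path_def by (elim conjE) assumption

lemma wall_breaks_reflect: "\<forall>i k. 0 < i \<and> i < m \<and> k \<in> {1..nb G} \<and> \<gamma> (s i) \<in> arc G k \<longrightarrow>
        sgn (\<gamma> (s (Suc i)) - \<gamma> (s i)) =
        reflect ((1 / crad G k) *\<^sub>R (\<gamma> (s i) - ctr G k)) (sgn (\<gamma> (s i) - \<gamma> (s (i - 1))))"
  using ap unfolding admissible_path_def by (elim conjE) assumption

lemma path_avoids_openings: "\<forall>t\<in>{0<..<1}. \<gamma> t \<notin> openings G"
  using ap unfolding admissible_path_def by (elim conjE) assumption

lemma path_avoids_corners: "\<forall>t\<in>{0..1}. \<gamma> t \<notin> corners G"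
  using ap unfolding admissible_path_def by (elim conjE) assumption

lemma path_not_tangent: "\<forall>i<m. \<forall>t\<in>{s i..s (Suc i)}. \<gamma> t \<in> sphere (dctr G) (rd G) \<longrightarrow>
        (\<gamma> (s (Suc i)) - \<gamma> (s i)) \<bullet> (\<gamma> t - dctr G) \<noteq> 0"
  using ap unfolding admissible_path_def by (elim conjE) assumption

lemma s_mono: "i \<le> j \<Longrightarrow> j \<le> m \<Longrightarrow> s i \<le> s j"
proof (induction j)
  case (Suc j)
  show ?case
  proof (cases "i = Suc j")
    case False
    then have "s i \<le> s j" using Suc by simp
    also have "s j < s (Suc j)" using s_less_Suc Suc by simp
    finally show ?thesis by simp
  qed simp
qed simp

lemma s_range: "i \<le> m \<Longrightarrow> 0 \<le> s i \<and> s i \<le> 1"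
  using s_mono[of 0 i] s_mono[of i m] s_first s_last by simp

lemma s_strict: assumes "i < j" "j \<le> m" shows "s i < s j"
proof -
  have "s i < s (Suc i)" using s_less_Suc assms by simp
  also have "s (Suc i) \<le> s j" using s_mono assms by simp
  finally show ?thesis .
qed

definition vertex :: "nat \<Rightarrow> pt" where "vertex i = \<gamma> (s i)"
definition edge :: "nat \<Rightarrow> pt" where "edge i = vertex (Suc i) - vertex i"

lemma vertex_Suc: "vertex (Suc i) = vertex i + edge i"
  by (simp add: edge_def)

lemma edge_nonzero: "i < m \<Longrightarrow> edge i \<noteq> 0"
  using path_segments by (auto simp: edge_def vertex_def)

definition is_seg_inverse :: "nat \<Rightarrow> (real \<Rightarrow> real) \<Rightarrow> bool" where
  "is_seg_inverse i g \<longleftrightarrow> continuous_on {0..1} g \<and> mono_on {0..1} g \<and>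
     g 0 = s i \<and> g 1 = s (Suc i) \<and>
     (\<forall>y\<in>{0..1}. g y \<in> {s i..s (Suc i)} \<and> \<gamma> (g y) = vertex i + y *\<^sub>R edge i)"

definition seg_inverse :: "nat \<Rightarrow> real \<Rightarrow> real" where
  "seg_inverse i = (SOME g. is_seg_inverse i g)"

lemma seg_inverse_spec:
  assumes "i < m"
  shows "is_seg_inverse i (seg_inverse i)"
proof -
  obtain lam where lam: "continuous_on {s i..s (Suc i)} lam" "strict_mono_on {s i..s (Suc i)} lam"
    "lam (s i) = 0" "lam (s (Suc i)) = 1"
    "\<forall>t\<in>{s i..s (Suc i)}. \<gamma> t = (1 - lam t) *\<^sub>R \<gamma> (s i) + lam t *\<^sub>R \<gamma> (s (Suc i))"
    using path_segments[rule_format, OF assms] by (elim conjE exE) blast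
  have "s i \<le> s (Suc i)" using s_less_Suc assms by (simp add: less_imp_le)
  from continuous_strict_mono_inverse[OF lam(1,2) this, unfolded lam(3,4)]
  obtain g where g: "continuous_on {0..1} g" "mono_on {0..1} g"
    "\<forall>y\<in>{0..1}. g y \<in> {s i..s (Suc i)} \<and> lam (g y) = y" "g 0 = s i" "g 1 = s (Suc i)"
    by blast
  have "\<gamma> (g y) = vertex i + y *\<^sub>R edge i" if "y \<in> {0..1}" for y
  proof -
    have "\<gamma> (g y) = (1 - lam (g y)) *\<^sub>R \<gamma> (s i) + lam (g y) *\<^sub>R \<gamma> (s (Suc i))"
      using lam(5) g(3) that by blast
    then show ?thesis using g(3) that by (simp add: vertex_def edge_def algebra_simps)
  qed
  then have "is_seg_inverse i g" unfolding is_seg_inverse_def using g by auto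
  then show ?thesis unfolding seg_inverse_def by (rule someI[of "is_seg_inverse i"])
qed

lemma
  assumes "i < m"
  shows seg_inverse_cont: "continuous_on {0..1} (seg_inverse i)"
    and seg_inverse_mono: "mono_on {0..1} (seg_inverse i)"
    and seg_inverse_0: "seg_inverse i 0 = s i"
    and seg_inverse_1: "seg_inverse i 1 = s (Suc i)"
    and seg_inverse_range: "y \<in> {0..1} \<Longrightarrow> seg_inverse i y \<in> {s i..s (Suc i)}"
    and path_seg_inverse: "y \<in> {0..1} \<Longrightarrow> \<gamma> (seg_inverse i y) = vertex i + y *\<^sub>R edge i"
  using seg_inverse_spec[OF assms] unfolding is_seg_inverse_def by simp_all

lemma edge_point_in_cell:
  assumes "i < m" "0 \<le> y" "y \<le> 1"
  shows "vertex i + y *\<^sub>R edge i \<in> cell G"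
proof -
  have "seg_inverse i y \<in> {0..1}"
    using seg_inverse_range[of i y] s_range[of i] s_range[of "Suc i"] assms by auto
  then have "\<gamma> (seg_inverse i y) \<in> cell G" using path_in_cell by blast
  then show ?thesis using path_seg_inverse[of i y] assms by simp
qed

definition on_disk :: "nat \<Rightarrow> bool" where "on_disk i \<longleftrightarrow> vertex i \<in> sphere (dctr G) (rd G)"

definition arc_index :: "nat \<Rightarrow> nat" where
  "arc_index i = (SOME k. k \<in> {1..nb G} \<and> vertex i \<in> arc G k)"

definition arc_normal :: "nat \<Rightarrow> pt" where
  "arc_normal i = (1 / crad G (arc_index i)) *\<^sub>R (ctr G (arc_index i) - vertex i)"

text \<open>After a disk vertex the velocity is the multiple of the next edge whose normal component
is the reversed incoming one; its tangential component has to be supplied by the disk.\<close>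

primrec vel_seg :: "nat \<Rightarrow> pt" where
  "vel_seg 0 = \<mu> *\<^sub>R edge 0"
| "vel_seg (Suc i) = (if on_disk (Suc i)
      then ((vel_seg i \<bullet> disk_en G (vertex (Suc i))) / (- (edge (Suc i) \<bullet> disk_en G (vertex (Suc i)))))
             *\<^sub>R edge (Suc i)
      else reflect (arc_normal (Suc i)) (vel_seg i))"

lemma inner_break_range: assumes "0 < i" "i < m" shows "s i \<in> {0<..<1}"
  using s_strict[of 0 i] s_strict[of i m] assms s_first s_last by auto

lemma inner_vertex_not_opening: assumes "0 < i" "i < m" shows "vertex i \<notin> openings G"
  using path_avoids_openings inner_break_range[OF assms] by (simp add: vertex_def)

lemma arc_index_props:
  assumes "0 < i" "i < m" "\<not> on_disk i"
  shows "arc_index i \<in> {1..nb G} \<and> vertex i \<in> arc G (arc_index i)"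
proof -
  have "vertex i \<in> frontier (box G)"
    using inner_breaks_on_boundary assms by (auto simp: vertex_def on_disk_def)
  then have "\<exists>k. k \<in> {1..nb G} \<and> vertex i \<in> arc G k"
    using inner_vertex_not_opening[OF assms(1,2)] frontier_box_eq[OF cg] by (auto simp: openings_def)
  then show ?thesis unfolding arc_index_def by (rule someI_ex)
qed

lemma cell_near_vertex:
  assumes "Suc i \<le> m" "0 < h" "h \<le> 1"
  shows "vertex i + h *\<^sub>R edge i \<in> cell G" "vertex (Suc i) + h *\<^sub>R (- edge i) \<in> cell G"
  using edge_point_in_cell[of i h] edge_point_in_cell[of i "1 - h"] assms
  by (simp_all add: vertex_Suc algebra_simps)

lemma edge_not_tangent:
  assumes "i < m" "j = i \<or> j = Suc i" "on_disk j"
  shows "edge i \<bullet> (vertex j - dctr G) \<noteq> 0"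
proof -
  have "s j \<in> {s i..s (Suc i)}" using assms s_less_Suc by (auto simp: less_imp_le)
  then show ?thesis
    using path_not_tangent assms unfolding on_disk_def edge_def vertex_def by blast
qed

lemma disk_vertex_crossing:
  assumes i: "0 < i" "i < m" and D: "on_disk i"
  shows "edge (i - 1) \<bullet> (vertex i - dctr G) < 0" "edge i \<bullet> (vertex i - dctr G) > 0"
proof -
  let ?c = "dctr G"
  have dq: "dist ?c (vertex i) = rd G" using D by (simp add: on_disk_def)
  have avoid: "cell G \<inter> ball (vertex i) 1 \<inter> ball ?c (rd G) = {}" by (auto simp: cell_def)
  have im: "Suc (i - 1) = i" "i - 1 < m" using i by auto
  have "vertex i + h *\<^sub>R (- edge (i - 1)) \<in> cell G" if "0 < h" "h \<le> 1" for h
    using cell_near_vertex(2)[of "i - 1" h] im that by simp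
  then have "(- edge (i - 1)) \<bullet> (vertex i - ?c) \<ge> 0"
    by (rule ray_avoiding_ball[OF dq zero_less_one _ avoid])
  moreover have "edge (i - 1) \<bullet> (vertex i - ?c) \<noteq> 0"
    using edge_not_tangent[of "i - 1" i] im D by simp
  ultimately show "edge (i - 1) \<bullet> (vertex i - ?c) < 0" by simp
  have "vertex i + h *\<^sub>R edge i \<in> cell G" if "0 < h" "h \<le> 1" for h
    using cell_near_vertex(1)[of i h] i that by simp
  then have "edge i \<bullet> (vertex i - ?c) \<ge> 0"
    by (rule ray_avoiding_ball[OF dq zero_less_one _ avoid])
  moreover have "edge i \<bullet> (vertex i - ?c) \<noteq> 0"
    using edge_not_tangent[of i i] i D by simp
  ultimately show "edge i \<bullet> (vertex i - ?c) > 0" by simp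
qed

lemma disk_vertex_normal_components:
  assumes "0 < i" "i < m" "on_disk i"
  shows "edge (i - 1) \<bullet> disk_en G (vertex i) > 0" "edge i \<bullet> disk_en G (vertex i) < 0"
  using disk_vertex_crossing[OF assms] cell_geometry_dims(3)[OF cg]
  by (simp_all add: disk_en_eq inner_minus_right divide_neg_pos)

lemma vel_seg_parallel: "i < m \<Longrightarrow> \<exists>\<kappa>>0. vel_seg i = \<kappa> *\<^sub>R edge i"
proof (induction i)
  case 0 then show ?case using mupos by auto
next
  case (Suc i)
  then obtain \<kappa> where k: "\<kappa> > 0" "vel_seg i = \<kappa> *\<^sub>R edge i" by auto
  show ?case
  proof (cases "on_disk (Suc i)")
    case True
    let ?en = "disk_en G (vertex (Suc i))"
    have "edge i \<bullet> ?en > 0" "edge (Suc i) \<bullet> ?en < 0"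
      using disk_vertex_normal_components[of "Suc i"] Suc.prems True by auto
    then have "(vel_seg i \<bullet> ?en) / (- (edge (Suc i) \<bullet> ?en)) > 0"
      using k by (simp add: divide_pos_neg)
    then show ?thesis using True by (simp only: vel_seg.simps if_True) blast
  next
    case False
    let ?k = "arc_index (Suc i)"
    have ak: "?k \<in> {1..nb G}" "vertex (Suc i) \<in> arc G ?k"
      using arc_index_props[of "Suc i"] Suc.prems False by auto
    have "sgn (edge (Suc i)) = reflect ((1 / crad G ?k) *\<^sub>R (vertex (Suc i) - ctr G ?k)) (sgn (edge i))"
      using wall_breaks_reflect ak Suc.prems unfolding edge_def vertex_def by auto
    moreover have "arc_normal (Suc i) = - ((1 / crad G ?k) *\<^sub>R (vertex (Suc i) - ctr G ?k))"
      by (simp add: arc_normal_def algebra_simps)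
    ultimately have refl: "sgn (edge (Suc i)) = reflect (arc_normal (Suc i)) (sgn (edge i))"
      by (simp add: reflect_uminus_normal)
    have dn: "edge i \<noteq> 0" "edge (Suc i) \<noteq> 0" using edge_nonzero Suc.prems by auto
    have "vel_seg (Suc i) = (\<kappa> * norm (edge i)) *\<^sub>R reflect (arc_normal (Suc i)) (sgn (edge i))"
      using False dn by (simp add: k reflect_scaleR sgn_div_norm)
    also have "\<dots> = (\<kappa> * norm (edge i)) *\<^sub>R sgn (edge (Suc i))"
      by (simp only: refl)
    also have "\<dots> = (\<kappa> * norm (edge i) / norm (edge (Suc i))) *\<^sub>R edge (Suc i)"
      by (simp add: sgn_div_norm divide_inverse_commute)
    finally show ?thesis using k dn by auto
  qed
qed

definition rate :: "nat \<Rightarrow> real" where "rate i = norm (vel_seg i) / norm (edge i)"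

lemma rate_pos: "i < m \<Longrightarrow> rate i > 0"
  and vel_seg_rate: "i < m \<Longrightarrow> vel_seg i = rate i *\<^sub>R edge i"
  using vel_seg_parallel edge_nonzero by (force simp: rate_def)+

text \<open>\<open>arrival i\<close> is the time at which the particle reaches vertex \<open>i\<close>; the unit steps
beyond the last vertex only keep the sequence strictly increasing.\<close>

primrec arrival :: "nat \<Rightarrow> real" where
  "arrival 0 = 0"
| "arrival (Suc i) = arrival i + (if i < m then 1 / rate i else 1)"

lemma arrival_strict_mono: "strict_mono arrival"
proof (rule strict_monoI_Suc)
  fix i
  have "(if i < m then 1 / rate i else 1) > 0" using rate_pos[of i] by auto
  then show "arrival i < arrival (Suc i)" by simp
qed

declare arrival.simps(2)[simp del]

lemma arrival_le: "i \<le> j \<Longrightarrow> arrival i \<le> arrival j"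
  using arrival_strict_mono by (simp add: strict_mono_less_eq)

lemma arrival_less: "i < j \<Longrightarrow> arrival i < arrival j"
  using arrival_strict_mono by (simp add: strict_mono_less)

lemma arrival_nonneg: "arrival i \<ge> 0"
  using arrival_strict_mono strict_mono_less_eq[OF arrival_strict_mono, of 0 i] by simp

lemma rate_arrival_diff: assumes "i < m" shows "rate i * (arrival (Suc i) - arrival i) = 1"
  using rate_pos[OF assms] assms by (simp add: arrival.simps(2))

definition t_end :: real where "t_end = arrival m"

text \<open>The edge travelled at time \<open>t\<close>; at an arrival time the outgoing edge.\<close>

definition seg_at :: "real \<Rightarrow> nat" where "seg_at t = card {j\<in>{1..<m}. arrival j \<le> t}"

lemma seg_at_eq: assumes "i < m" "arrival i \<le> t" "Suc i = m \<or> t < arrival (Suc i)" shows "seg_at t = i"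
  unfolding seg_at_def using card_le_strict_mono_eq[OF arrival_strict_mono assms(1)] assms by blast

lemma seg_at_mono: "s1 \<le> t \<Longrightarrow> seg_at s1 \<le> seg_at t"
  unfolding seg_at_def by (intro card_mono) auto

lemma piece_of:
  assumes "0 \<le> t" "t \<le> t_end"
  shows "\<exists>i<m. arrival i \<le> t \<and> t \<le> arrival (Suc i) \<and> (Suc i = m \<or> t < arrival (Suc i))"
proof -
  define J where "J = {j. j < m \<and> arrival j \<le> t}"
  have fin: "finite J" by (simp add: J_def)
  have ne: "0 \<in> J" using assms m_ge_1 by (simp add: J_def)
  define i where "i = Max J"
  have "i \<in> J" using Max_in[OF fin] ne by (auto simp: i_def)
  then have i: "i < m" "arrival i \<le> t" by (auto simp: J_def)
  show ?thesis
  proof (cases "Suc i = m")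
    case True
    then show ?thesis using i assms by (auto simp: t_end_def)
  next
    case False
    then have "Suc i < m" using i by simp
    moreover have "Suc i \<notin> J" using fin i_def by (metis Max_ge Suc_n_not_le_n)
    ultimately have "t < arrival (Suc i)" by (auto simp: J_def)
    then show ?thesis using i by auto
  qed
qed

lemma seg_at_range: assumes "0 \<le> t" "t \<le> t_end"
  shows "seg_at t < m" "arrival (seg_at t) \<le> t" "t \<le> arrival (Suc (seg_at t))"
  using piece_of[OF assms] seg_at_eq by force+

definition reparam :: "real \<Rightarrow> real" where
  "reparam t = seg_inverse (seg_at t) (rate (seg_at t) * (t - arrival (seg_at t)))"

lemma rate_fraction_range: assumes "i < m" "arrival i \<le> t" "t \<le> arrival (Suc i)"
  shows "0 \<le> rate i * (t - arrival i)" "rate i * (t - arrival i) \<le> 1"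
proof -
  show "0 \<le> rate i * (t - arrival i)" using rate_pos[OF assms(1)] assms by simp
  have "rate i * (t - arrival i) \<le> rate i * (arrival (Suc i) - arrival i)"
    using rate_pos[OF assms(1)] assms by (simp add: mult_left_mono)
  then show "rate i * (t - arrival i) \<le> 1" using rate_arrival_diff[OF assms(1)] by simp
qed

lemma reparam_piece: assumes "i < m" "arrival i \<le> t" "t \<le> arrival (Suc i)"
  shows "reparam t = seg_inverse i (rate i * (t - arrival i))"
proof (cases "Suc i = m \<or> t < arrival (Suc i)")
  case True
  then show ?thesis using seg_at_eq[OF assms(1,2)] by (simp add: reparam_def)
next
  case False
  then have t: "t = arrival (Suc i)" "Suc i < m" using assms by auto
  have "t < arrival (Suc (Suc i))" using t arrival_less[of "Suc i" "Suc (Suc i)"] by simp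
  then have "seg_at t = Suc i" using seg_at_eq[of "Suc i" t] t by simp
  then have "reparam t = seg_inverse (Suc i) 0" using t by (simp add: reparam_def)
  also have "\<dots> = s (Suc i)" using seg_inverse_0[OF t(2)] .
  also have "\<dots> = seg_inverse i 1" using seg_inverse_1[OF assms(1)] by simp
  also have "1 = rate i * (t - arrival i)" using rate_arrival_diff[OF assms(1)] t by simp
  finally show ?thesis .
qed

lemma path_on_piece: assumes "i < m" "arrival i \<le> t" "t \<le> arrival (Suc i)"
  shows "\<gamma> (reparam t) = vertex i + (t - arrival i) *\<^sub>R vel_seg i" "reparam t \<in> {s i..s (Suc i)}"
proof -
  have y: "rate i * (t - arrival i) \<in> {0..1}" using rate_fraction_range[OF assms] by simp
  have "\<gamma> (reparam t) = vertex i + (rate i * (t - arrival i)) *\<^sub>R edge i"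
    using reparam_piece[OF assms] path_seg_inverse[OF assms(1) y] by simp
  also have "\<dots> = vertex i + (t - arrival i) *\<^sub>R vel_seg i"
    using vel_seg_rate[OF assms(1)] by (simp add: algebra_simps)
  finally show "\<gamma> (reparam t) = vertex i + (t - arrival i) *\<^sub>R vel_seg i" .
  show "reparam t \<in> {s i..s (Suc i)}" using reparam_piece[OF assms] seg_inverse_range[OF assms(1) y] by simp
qed

lemma reparam_range: assumes "0 \<le> t" "t \<le> t_end" shows "reparam t \<in> {0..1}"
proof -
  obtain i where i: "i < m" "arrival i \<le> t" "t \<le> arrival (Suc i)" using piece_of[OF assms] by blast
  then have "reparam t \<in> {s i..s (Suc i)}" using path_on_piece by blast
  then show ?thesis using s_range[of i] s_range[of "Suc i"] i by auto
qed

lemma t_end_pos: "t_end > 0"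
  using arrival_less[of 0 m] m_ge_1 by (simp add: t_end_def)

lemma reparam_0: "reparam 0 = 0"
proof -
  have "arrival 0 \<le> arrival (Suc 0)" by (rule arrival_le) simp
  then have "reparam 0 = seg_inverse 0 (rate 0 * (0 - arrival 0))" using reparam_piece[of 0 0] m_ge_1 by simp
  then show ?thesis using seg_inverse_0[of 0] m_ge_1 s_first by simp
qed

lemma reparam_end: "reparam t_end = 1"
proof -
  have m: "m - 1 < m" "Suc (m - 1) = m" using m_ge_1 by auto
  have "arrival (m - 1) \<le> arrival m" by (rule arrival_le) simp
  then have "reparam t_end = seg_inverse (m - 1) (rate (m - 1) * (t_end - arrival (m - 1)))"
    using reparam_piece[of "m - 1" t_end] m by (simp add: t_end_def)
  also have "rate (m - 1) * (t_end - arrival (m - 1)) = 1" using rate_arrival_diff[of "m - 1"] m by (simp add: t_end_def)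
  finally show ?thesis using seg_inverse_1[of "m - 1"] m s_last by simp
qed

lemma pieces_union: "{0..t_end} = (\<Union>i\<in>{..<m}. {arrival i..arrival (Suc i)})"
proof
  show "{0..t_end} \<subseteq> (\<Union>i\<in>{..<m}. {arrival i..arrival (Suc i)})"
    using piece_of by fastforce
  show "(\<Union>i\<in>{..<m}. {arrival i..arrival (Suc i)}) \<subseteq> {0..t_end}"
  proof
    fix t assume "t \<in> (\<Union>i\<in>{..<m}. {arrival i..arrival (Suc i)})"
    then obtain i where i: "i < m" "arrival i \<le> t" "t \<le> arrival (Suc i)" by auto
    have "arrival (Suc i) \<le> arrival m" using i by (intro arrival_le) simp
    then show "t \<in> {0..t_end}" using i arrival_nonneg[of i] by (auto simp: t_end_def)
  qed
qed

lemma reparam_cont: "continuous_on {0..t_end} reparam"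
  unfolding pieces_union
proof (rule continuous_on_closed_Union)
  fix i assume i: "i \<in> {..<m}"
  have "continuous_on {arrival i..arrival (Suc i)} (\<lambda>t. seg_inverse i (rate i * (t - arrival i)))"
  proof (rule continuous_on_compose2[of "{0..1}" "seg_inverse i"])
    show "continuous_on {0..1} (seg_inverse i)" using seg_inverse_cont i by simp
    show "continuous_on {arrival i..arrival (Suc i)} (\<lambda>t. rate i * (t - arrival i))" by (intro continuous_intros)
    show "(\<lambda>t. rate i * (t - arrival i)) ` {arrival i..arrival (Suc i)} \<subseteq> {0..1}"
      using rate_fraction_range i by auto
  qed
  then show "continuous_on {arrival i..arrival (Suc i)} reparam"
    by (rule continuous_on_eq) (use reparam_piece i in auto)
qed auto

lemma reparam_mono: "mono_on {0..t_end} reparam"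
proof (rule mono_onI)
  fix x y assume xy: "x \<in> {0..t_end}" "y \<in> {0..t_end}" "x \<le> y"
  let ?i = "seg_at x" and ?j = "seg_at y"
  have ix: "?i < m" "arrival ?i \<le> x" "x \<le> arrival (Suc ?i)" using seg_at_range xy by auto
  have iy: "?j < m" "arrival ?j \<le> y" "y \<le> arrival (Suc ?j)" using seg_at_range xy by auto
  have ij: "?i \<le> ?j" using seg_at_mono xy by simp
  show "reparam x \<le> reparam y"
  proof (cases "?i = ?j")
    case True
    have a: "rate ?i * (x - arrival ?i) \<in> {0..1}" "rate ?i * (y - arrival ?i) \<in> {0..1}"
      using rate_fraction_range ix iy True by auto
    have "rate ?i * (x - arrival ?i) \<le> rate ?i * (y - arrival ?i)" using rate_pos[OF ix(1)] xy by simp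
    then have "seg_inverse ?i (rate ?i * (x - arrival ?i)) \<le> seg_inverse ?i (rate ?i * (y - arrival ?i))"
      using seg_inverse_mono[OF ix(1)] a by (simp add: mono_on_def)
    then show ?thesis using reparam_piece ix iy True by simp
  next
    case False
    then have "?i < ?j" using ij by simp
    have "reparam x \<le> s (Suc ?i)" using path_on_piece(2)[OF ix] by simp
    also have "s (Suc ?i) \<le> s ?j" using s_mono \<open>?i < ?j\<close> iy by simp
    also have "s ?j \<le> reparam y" using path_on_piece(2)[OF iy] by simp
    finally show ?thesis .
  qed
qed

definition particle_pos :: "real \<Rightarrow> pt" where "particle_pos t = \<gamma> (reparam t)"
definition particle_vel :: "real \<Rightarrow> pt" where "particle_vel t = vel_seg (seg_at t)"
definition jump_idx :: "nat set" where "jump_idx = {i\<in>{1..<m}. vel_seg i \<noteq> vel_seg (i - 1)}"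
definition disk_idx :: "nat set" where "disk_idx = {i\<in>{1..<m}. on_disk i}"

lemma vel_seg_const:
  assumes "i \<le> j" "j < m" "\<And>l. i < l \<Longrightarrow> l \<le> j \<Longrightarrow> l \<notin> jump_idx"
  shows "vel_seg j = vel_seg i"
  using assms
proof (induction j)
  case (Suc j)
  show ?case
  proof (cases "i = Suc j")
    case False
    then have "vel_seg j = vel_seg i" using Suc by auto
    moreover have "Suc j \<notin> jump_idx" using Suc.prems False by simp
    ultimately show ?thesis using Suc.prems(2) by (simp add: jump_idx_def)
  qed simp
qed simp

lemma particle_pos_piece:
  "i < m \<Longrightarrow> arrival i \<le> t \<Longrightarrow> t \<le> arrival (Suc i) \<Longrightarrow>
    particle_pos t = vertex i + (t - arrival i) *\<^sub>R vel_seg i"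
  unfolding particle_pos_def by (rule path_on_piece(1))

lemma particle_pos_arrival: "i < m \<Longrightarrow> particle_pos (arrival i) = vertex i"
  using particle_pos_piece[of i "arrival i"] arrival_le[of i "Suc i"] by simp

lemma particle_pos_linear:
  assumes "i \<le> j" "j < m" "\<And>l. i < l \<Longrightarrow> l \<le> j \<Longrightarrow> l \<notin> jump_idx"
    and "arrival i \<le> t" "t \<le> arrival (Suc j)"
  shows "particle_pos t = vertex i + (t - arrival i) *\<^sub>R vel_seg i"
  using assms
proof (induction j arbitrary: t)
  case (Suc j)
  show ?case
  proof (cases "i = Suc j \<or> t \<le> arrival (Suc j)")
    case True
    then show ?thesis using Suc particle_pos_piece[of "Suc j" t] by (cases "i = Suc j") auto
  next
    case False
    then have ij: "i \<le> j" "arrival i \<le> arrival (Suc j)" using Suc.prems arrival_le by auto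
    have PS: "vertex (Suc j) = vertex i + (arrival (Suc j) - arrival i) *\<^sub>R vel_seg i"
      using Suc.IH[of "arrival (Suc j)"] Suc.prems ij particle_pos_arrival[of "Suc j"] by auto
    have VS: "vel_seg (Suc j) = vel_seg i" using vel_seg_const[of i "Suc j"] Suc.prems by simp
    have "particle_pos t = vertex (Suc j) + (t - arrival (Suc j)) *\<^sub>R vel_seg (Suc j)"
      using particle_pos_piece[of "Suc j" t] Suc.prems False by auto
    also have "\<dots> = vertex i + (t - arrival i) *\<^sub>R vel_seg i"
      unfolding PS VS by (simp add: algebra_simps)
    finally show ?thesis .
  qed
qed (use particle_pos_piece[of 0] in auto)

lemma arrival_before_end:
  assumes "0 < t" "t \<le> t_end"
  shows "\<exists>k<m. arrival k < t \<and> t \<le> arrival (Suc k)"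
proof -
  obtain i where i: "i < m" "arrival i \<le> t" "t \<le> arrival (Suc i)"
    using piece_of[of t] assms(2) less_imp_le[OF assms(1)] by blast
  show ?thesis
  proof (cases "arrival i < t")
    case False
    then have t: "t = arrival i" using i by simp
    then have "i \<noteq> 0" using assms(1) by (metis arrival.simps(1) less_irrefl)
    then show ?thesis using i t arrival_less[of "i - 1" i] by (intro exI[of _ "i - 1"]) auto
  qed (use i in blast)
qed

lemma before_next_arrival:
  assumes "0 \<le> t" "t < t_end"
  shows "t < arrival (Suc (seg_at t))"
proof (rule ccontr)
  let ?i = "seg_at t"
  have i: "?i < m" "t \<le> arrival (Suc ?i)" using seg_at_range assms by auto
  assume "\<not> t < arrival (Suc ?i)"
  then have t: "t = arrival (Suc ?i)" using i by simp
  have "Suc ?i = m"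
  proof (rule ccontr)
    assume "Suc ?i \<noteq> m"
    then have "seg_at t = Suc ?i"
      using i t arrival_less[of "Suc ?i" "Suc (Suc ?i)"] by (intro seg_at_eq) auto
    then show False by simp
  qed
  then show False using t assms by (simp add: t_end_def)
qed

lemma free_flight_pos:
  assumes st: "0 \<le> s1" "s1 \<le> t" "t \<le> t_end" and nj: "arrival ` jump_idx \<inter> {s1<..<t} = {}"
  shows "particle_pos t = particle_pos s1 + (t - s1) *\<^sub>R particle_vel s1"
proof (cases "s1 = t")
  case False
  let ?i = "seg_at s1"
  have s1: "s1 < t_end" "0 < t" using st False by auto
  have i: "?i < m" "arrival ?i \<le> s1" "s1 < arrival (Suc ?i)"
    using seg_at_range[OF st(1) less_imp_le[OF s1(1)]] before_next_arrival[OF st(1) s1(1)] by auto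
  obtain k where k: "k < m" "arrival k < t" "t \<le> arrival (Suc k)"
    using arrival_before_end[OF s1(2) st(3)] by blast
  have "arrival ?i < arrival (Suc k)" using i k st False by linarith
  then have "?i \<le> k" using arrival_strict_mono by (simp add: strict_mono_less)
  moreover have "l \<notin> jump_idx" if "?i < l" "l \<le> k" for l
  proof -
    have "s1 < arrival l" using i arrival_le[of "Suc ?i" l] that by simp
    moreover have "arrival l < t" using k arrival_le[of l k] that by simp
    ultimately show ?thesis using nj by auto
  qed
  ultimately have "particle_pos t = vertex ?i + (t - arrival ?i) *\<^sub>R vel_seg ?i"
    using particle_pos_linear[of ?i k t] i k st by simp
  moreover have "particle_pos s1 = vertex ?i + (s1 - arrival ?i) *\<^sub>R vel_seg ?i"
    using particle_pos_piece i by simp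
  ultimately show ?thesis by (simp add: particle_vel_def scaleR_diff_left)
qed simp

lemma free_flight_vel:
  assumes st: "0 \<le> s1" "s1 \<le> t" "t < t_end" and nj: "arrival ` jump_idx \<inter> {s1<..t} = {}"
  shows "particle_vel t = particle_vel s1"
proof -
  let ?i = "seg_at s1" and ?k = "seg_at t"
  have i: "?i < m" "s1 < arrival (Suc ?i)"
    using seg_at_range(1)[of s1] before_next_arrival[of s1] st by auto
  have k: "?k < m" "arrival ?k \<le> t" using seg_at_range(1,2)[of t] st by auto
  have "l \<notin> jump_idx" if "?i < l" "l \<le> ?k" for l
  proof -
    have "s1 < arrival l" using i arrival_le[of "Suc ?i" l] that by simp
    moreover have "arrival l \<le> t" using k arrival_le[of l ?k] that by simp
    ultimately show ?thesis using nj by auto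
  qed
  then show ?thesis using vel_seg_const[of ?i ?k] seg_at_mono st k by (simp add: particle_vel_def)
qed

lemma disk_idx_subset_jump_idx: "disk_idx \<subseteq> jump_idx"
proof
  fix i assume i: "i \<in> disk_idx"
  then have i1: "0 < i" "i < m" "on_disk i" by (auto simp: disk_idx_def)
  let ?en = "disk_en G (vertex i)"
  have "vel_seg (i - 1) \<bullet> ?en > 0" "vel_seg i \<bullet> ?en < 0"
    using disk_vertex_normal_components[OF i1] rate_pos[of "i - 1"] vel_seg_rate[of "i - 1"]
      rate_pos[of i] vel_seg_rate[of i] i1 by (simp_all add: mult_pos_neg)
  then have "vel_seg i \<noteq> vel_seg (i - 1)" by auto
  then show "i \<in> jump_idx" using i by (auto simp: jump_idx_def disk_idx_def)
qed

text \<open>The \<open>i\<close>-th driver hits the disk at \<open>drive_time i\<close>, halfway between the arrivals at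
vertices \<open>i - 1\<close> and \<open>i\<close>, and sets the angular velocity to \<open>spin_before i\<close>, the
tangential component of \<open>vel_seg i\<close>.  At a disk vertex the particle then leaves the disk
spinning at \<open>spin_after i\<close>.\<close>

definition drive_time :: "nat \<Rightarrow> real" where "drive_time i = (arrival (i - 1) + arrival i) / 2"
definition spin_before :: "nat \<Rightarrow> real" where "spin_before i = vel_seg i \<bullet> disk_et G (vertex i)"
definition spin_after :: "nat \<Rightarrow> real" where "spin_after i = vel_seg (i - 1) \<bullet> disk_et G (vertex i)"

definition spin_settled :: "nat \<Rightarrow> real" where
  "spin_settled i = (if on_disk i then spin_after i else spin_before i)"

definition drives_before :: "real \<Rightarrow> nat" where
  "drives_before t = card {i\<in>{1..<m}. drive_time i \<le> t}"

definition spin :: "real \<Rightarrow> real" where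
  "spin t = (let k = drives_before t in
     if k = 0 then \<omega>0 else if t < arrival k then spin_before k else spin_settled k)"

definition spin_pre_drive :: "nat \<Rightarrow> real" where
  "spin_pre_drive i = (if i = 1 then \<omega>0 else spin_settled (i - 1))"

lemma drive_time_bounds: assumes "1 \<le> i" shows "arrival (i - 1) < drive_time i" "drive_time i < arrival i"
proof -
  have "arrival (i - 1) < arrival i" using assms by (intro arrival_less) simp
  then show "arrival (i - 1) < drive_time i" "drive_time i < arrival i" by (auto simp: drive_time_def)
qed

lemma drive_time_strict_mono: "strict_mono drive_time"
proof (rule strict_monoI_Suc)
  fix i
  show "drive_time i < drive_time (Suc i)"
  proof (cases i)
    case 0 then show ?thesis using arrival_less[of 0 1] by (simp add: drive_time_def)
  next
    case (Suc j)
    then show ?thesis using arrival_less[of j "Suc j"] arrival_less[of "Suc j" "Suc (Suc j)"] by (simp add: drive_time_def)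
  qed
qed

lemma drives_before_eq:
  assumes "k < m" "k = 0 \<or> drive_time k \<le> t" "Suc k = m \<or> t < drive_time (Suc k)"
  shows "drives_before t = k"
  unfolding drives_before_def using card_le_strict_mono_eq[OF drive_time_strict_mono assms] .

lemma drives_before_less: "drives_before t < m"
proof -
  have "drives_before t \<le> card {1..<m}" unfolding drives_before_def by (rule card_mono) auto
  then show ?thesis using m_ge_1 by simp
qed

lemma spin_0: "spin 0 = \<omega>0"
proof -
  have "drive_time 1 > 0" using drive_time_bounds[of 1] arrival_nonneg[of 0] by simp
  then have "drives_before 0 = 0" using m_ge_1 by (intro drives_before_eq) auto
  then show ?thesis by (simp add: Let_def spin_def)
qed

lemma drive_time_pos: "1 \<le> k \<Longrightarrow> 0 < drive_time k"
  using drive_time_bounds(1)[of k] arrival_nonneg[of "k - 1"] by simp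

lemma spin_at_drive:
  assumes k: "k \<in> {1..<m}"
  shows "spin (drive_time k) = spin_before k" "left_val spin (drive_time k) (spin_pre_drive k)"
proof -
  have k1: "1 \<le> k" "k < m" using k by auto
  have "drives_before (drive_time k) = k"
    using k1 drive_time_strict_mono by (intro drives_before_eq) (auto simp: strict_mono_less)
  then show "spin (drive_time k) = spin_before k" using drive_time_bounds[OF k1(1)] k1 by (simp add: Let_def spin_def)
  show "left_val spin (drive_time k) (spin_pre_drive k)"
    unfolding left_val_def
  proof (intro exI[of _ "drive_time k - arrival (k - 1)"] conjI ballI)
    show "0 < drive_time k - arrival (k - 1)" using drive_time_bounds[OF k1(1)] by simp
    fix u assume u: "u \<in> {drive_time k - (drive_time k - arrival (k - 1))<..<drive_time k}"
    then have u1: "arrival (k - 1) < u" "u < drive_time k" by auto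
    show "spin u = spin_pre_drive k"
    proof (cases "k = 1")
      case True
      then have "drives_before u = 0" using u1 m_ge_1 by (intro drives_before_eq) auto
      then show ?thesis using True by (simp add: Let_def spin_def spin_pre_drive_def)
    next
      case False
      then have k2: "1 \<le> k - 1" "Suc (k - 1) = k" "k - 1 < m" using k1 by auto
      have "drive_time (k - 1) \<le> u" using drive_time_bounds(2)[OF k2(1)] u1 by simp
      then have "drives_before u = k - 1" using u1 k2 by (intro drives_before_eq) auto
      moreover have "\<not> u < arrival (k - 1)" using u1 by simp
      moreover have "k - 1 \<noteq> 0" using k2 by simp
      ultimately show ?thesis using False by (simp add: Let_def spin_def spin_pre_drive_def)
    qed
  qed
qed

lemma spin_at_disk_vertex:
  assumes k: "k \<in> disk_idx"
  shows "spin (arrival k) = spin_after k" "left_val spin (arrival k) (spin_before k)"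
proof -
  have k1: "1 \<le> k" "k < m" "on_disk k" using k by (auto simp: disk_idx_def)
  have a: "drive_time k \<le> arrival k" using drive_time_bounds(2)[OF k1(1)] by simp
  have b: "Suc k = m \<or> arrival k < drive_time (Suc k)" using drive_time_bounds(1)[of "Suc k"] by simp
  have "drives_before (arrival k) = k" using k1 a b by (intro drives_before_eq) auto
  then show "spin (arrival k) = spin_after k" using k1 by (simp add: Let_def spin_def spin_settled_def)
  show "left_val spin (arrival k) (spin_before k)"
    unfolding left_val_def
  proof (intro exI[of _ "arrival k - drive_time k"] conjI ballI)
    show "0 < arrival k - drive_time k" using drive_time_bounds(2)[OF k1(1)] by simp
    fix u assume u: "u \<in> {arrival k - (arrival k - drive_time k)<..<arrival k}"
    then have u1: "drive_time k < u" "u < arrival k" by auto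
    have "Suc k = m \<or> u < drive_time (Suc k)" using b u1 by auto
    then have "drives_before u = k" using k1 u1 by (intro drives_before_eq) auto
    then show "spin u = spin_before k" using u1 k1 by (simp add: Let_def spin_def)
  qed
qed

lemma spin_const:
  assumes st: "s1 \<le> t" and nj: "(arrival ` disk_idx \<union> drive_time ` {1..<m}) \<inter> {s1<..t} = {}"
  shows "spin t = spin s1"
proof -
  let ?A = "{i\<in>{1..<m}. drive_time i \<le> s1}" and ?B = "{i\<in>{1..<m}. drive_time i \<le> t}"
  have AB: "?A \<subseteq> ?B" using st by auto
  have "?A = ?B"
  proof (rule ccontr)
    assume "?A \<noteq> ?B"
    then obtain i where "i \<in> ?B" "i \<notin> ?A" using AB by blast
    then have "drive_time i \<in> (arrival ` disk_idx \<union> drive_time ` {1..<m}) \<inter> {s1<..t}" by auto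
    then show False using nj by blast
  qed
  then have ndq: "drives_before t = drives_before s1" by (simp add: drives_before_def)
  show ?thesis
  proof (cases "drives_before t = 0")
    case True then show ?thesis using ndq by (simp add: Let_def spin_def)
  next
    case False
    let ?k = "drives_before t"
    have k: "?k \<in> {1..<m}" using False drives_before_less[of t] by auto
    show ?thesis
    proof (cases "s1 < arrival ?k \<and> \<not> t < arrival ?k")
      case True
      have "\<not> on_disk ?k"
      proof
        assume "on_disk ?k"
        then have "?k \<in> disk_idx" using k by (simp add: disk_idx_def)
        then have "arrival ?k \<in> (arrival ` disk_idx \<union> drive_time ` {1..<m}) \<inter> {s1<..t}" using True by auto
        then show False using nj by blast
      qed
      then show ?thesis using ndq False True by (simp add: Let_def spin_def spin_settled_def)
    next
      case False
      then have "(s1 < arrival ?k) = (t < arrival ?k)" using st by auto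
      then show ?thesis using ndq by (simp add: Let_def spin_def)
    qed
  qed
qed

lemma vertex_in_cell: "i \<le> m \<Longrightarrow> vertex i \<in> cell G"
  using path_in_cell s_range[of i] by (auto simp: vertex_def)

lemma vertex_not_corner: "i \<le> m \<Longrightarrow> vertex i \<notin> corners G"
  using path_avoids_corners s_range[of i] by (auto simp: vertex_def)

lemma wall_collision:
  assumes i: "i \<in> jump_idx - disk_idx"
  shows "wall_rule G (vertex i) (vel_seg (i - 1)) (vel_seg i)"
proof -
  have i1: "0 < i" "i < m" "\<not> on_disk i" "vel_seg i \<noteq> vel_seg (i - 1)"
    using i by (auto simp: jump_idx_def disk_idx_def)
  have si: "Suc (i - 1) = i" "i - 1 < m" using i1 by auto
  let ?k = "arc_index i" and ?q = "vertex i"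
  have ak: "?k \<in> {1..nb G}" "?q \<in> arc G ?k" using arc_index_props i1 by auto
  obtain e where e: "e > 0" "box G \<inter> ball ?q e \<inter> ball (ctr G ?k) (crad G ?k) = {}"
    using arc_props(4)[OF cg ak(1)] ak(2) by (metis inf_commute)
  have dq: "dist (ctr G ?k) ?q = crad G ?k" using arc_props(2)[OF cg ak(1)] ak(2) by auto
  \<comment> \<open>dispersing boundary: the incoming edge does not come from inside the circle\<close>
  have "(- edge (i - 1)) \<bullet> (?q - ctr G ?k) \<ge> 0"
    using ray_avoiding_ball[OF dq e(1) _ e(2)] cell_near_vertex(2)[of "i - 1"] si cell_subset_box
    by (metis less_eq_Suc_le subsetD)
  then have "vel_seg (i - 1) \<bullet> arc_normal i \<ge> 0"
    using rate_pos[of "i - 1"] vel_seg_rate[of "i - 1"] arc_props(1)[OF cg ak(1)] si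
    by (simp add: arc_normal_def inner_diff_right)
  moreover have Vi: "vel_seg i = reflect (arc_normal i) (vel_seg (i - 1))"
    using vel_seg.simps(2)[of "i - 1"] si i1 by simp
  then have "vel_seg (i - 1) \<bullet> arc_normal i \<noteq> 0"
    using i1(4) by (auto simp: reflect_def)
  ultimately have "vel_seg (i - 1) \<bullet> arc_normal i > 0" by linarith
  then show ?thesis
    unfolding wall_rule_def Let_def using vertex_not_corner[OF less_imp_le[OF i1(2)]] ak Vi
    unfolding arc_normal_def by blast
qed

lemma disk_collision:
  assumes i: "i \<in> disk_idx"
  shows "disk_rule G (vertex i) (vel_seg (i - 1)) (vel_seg i) (spin_before i) (spin_after i)"
proof -
  have i1: "0 < i" "i < m" "on_disk i" using i by (auto simp: disk_idx_def)
  have si: "Suc (i - 1) = i" "i - 1 < m" using i1 by auto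
  let ?q = "vertex i" and ?en = "disk_en G (vertex i)" and ?et = "disk_et G (vertex i)"
  have sph: "?q \<in> sphere (dctr G) (rd G)" using i1 by (simp add: on_disk_def)
  have nc: "edge (i - 1) \<bullet> ?en > 0" "edge i \<bullet> ?en < 0"
    using disk_vertex_normal_components[OF i1] by auto
  have vn: "vel_seg (i - 1) \<bullet> ?en > 0"
    using nc rate_pos[of "i - 1"] vel_seg_rate[of "i - 1"] si by simp
  have Vi: "vel_seg i = ((vel_seg (i - 1) \<bullet> ?en) / (- (edge i \<bullet> ?en))) *\<^sub>R edge i"
    using vel_seg.simps(2)[of "i - 1"] si i1 by simp
  then have "vel_seg i \<bullet> ?en = - (vel_seg (i - 1) \<bullet> ?en)" using nc by simp
  moreover have "vel_seg i = (vel_seg i \<bullet> ?en) *\<^sub>R ?en + (vel_seg i \<bullet> ?et) *\<^sub>R ?et"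
    using disk_frame_decomp sph cell_geometry_dims(3)[OF cg] by simp
  ultimately have "vel_seg i = (- (vel_seg (i - 1) \<bullet> ?en)) *\<^sub>R ?en + spin_before i *\<^sub>R ?et"
    by (simp add: spin_before_def)
  then show ?thesis unfolding disk_rule_def using sph vn by (simp add: spin_after_def)
qed

lemma edge_inner_point_not_opening:
  assumes j: "j < m" and h: "0 < h" "h < 1"
  shows "vertex j + h *\<^sub>R edge j \<notin> openings G"
proof -
  let ?t = "seg_inverse j h"
  have t: "?t \<in> {s j..s (Suc j)}" "\<gamma> ?t = vertex j + h *\<^sub>R edge j"
    using seg_inverse_range[OF j] path_seg_inverse[OF j] h by auto
  have "?t \<noteq> s j" using t edge_nonzero[OF j] h by (auto simp: vertex_def[symmetric])
  moreover have "?t \<noteq> s (Suc j)"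
  proof
    assume "?t = s (Suc j)"
    then have "1 *\<^sub>R edge j = h *\<^sub>R edge j" using t by (simp add: vertex_def[symmetric] vertex_Suc)
    then show False using edge_nonzero[OF j] h by (simp only: scaleR_cancel_right) simp
  qed
  ultimately have "?t \<in> {0<..<1}" using t s_range[of j] s_range[of "Suc j"] j by auto
  then show ?thesis using path_avoids_openings t(2) by (metis greaterThanLessThan_iff)
qed

lemma last_edge_not_vertical:
  assumes op: "\<gamma> 1 \<in> openings G"
  shows "fst (edge (m - 1)) \<noteq> 0"
proof
  define j where "j = m - 1"
  have j: "j < m" "\<gamma> 1 = vertex j + edge j"
    using m_ge_1 s_last vertex_Suc[of j] by (auto simp: j_def vertex_def)
  define U where "U = (\<Union>k\<in>{1..nb G}. arc G k)"
  define f where "f h = vertex j + h *\<^sub>R edge j" for h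
  assume "fst (edge (m - 1)) = 0"
  then have "fst (f h) = fst (\<gamma> 1)" for h using j by (simp add: f_def j_def)
  moreover have "fst (\<gamma> 1) = 0 \<or> fst (\<gamma> 1) = Lw G"
    using op by (auto simp: openings_def openL_def openR_def)
  ultimately have side: "fst (f h) = 0 \<or> fst (f h) = Lw G" for h by simp
  \<comment> \<open>A vertical last edge would run inside the frontier of the box, hence along the arcs.\<close>
  have "f h \<in> U" if "h \<in> {0<..<1}" for h
  proof -
    have "f h \<in> box G"
      using subsetD[OF cell_subset_box edge_point_in_cell[OF j(1), of h]] that by (simp add: f_def)
    then have "f h \<in> frontier (box G)"
      using side_not_interior_box[OF cg side] closure_subset by (auto simp: frontier_def)
    then show ?thesis
      using edge_inner_point_not_opening[OF j(1)] that frontier_box_eq[OF cg]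
      by (auto simp: U_def f_def openings_def)
  qed
  then have ev: "\<forall>\<^sub>F h in at_left 1. f h \<in> U"
    using eventually_at_left_real[of 0 "1::real"] by (auto elim: eventually_mono)
  have "(f \<longlongrightarrow> f 1) (at_left 1)" unfolding f_def by (intro tendsto_intros)
  then have lim: "(f \<longlongrightarrow> \<gamma> 1) (at_left 1)" using j by (simp add: f_def)
  have "closed U"
    unfolding U_def by (rule compact_imp_closed, rule compact_UN) (use arc_props(3)[OF cg] in auto)
  then have "\<gamma> 1 \<in> U" using Lim_in_closed_set[OF _ ev trivial_limit_at_left_real lim] by blast
  then obtain k where "k \<in> {1..nb G}" "\<gamma> 1 \<in> arc G k" by (auto simp: U_def)
  then have "\<gamma> 1 \<in> corners G" using opening_on_arc_is_corner[OF op] by blast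
  then show False using path_avoids_corners by auto
qed

lemma exit_velocity:
  assumes op: "\<gamma> 1 \<in> openings G"
  shows "(\<gamma> 1 \<in> openL G \<and> fst (vel_seg (m - 1)) < 0) \<or>
         (\<gamma> 1 \<in> openR G \<and> fst (vel_seg (m - 1)) > 0)"
proof -
  define j where "j = m - 1"
  have j: "j < m" "\<gamma> 1 = vertex j + edge j"
    using m_ge_1 s_last vertex_Suc[of j] by (auto simp: j_def vertex_def)
  have "vertex j \<in> box G" using vertex_in_cell[of j] j cell_subset_box by auto
  then have bounds: "0 \<le> fst (vertex j)" "fst (vertex j) \<le> Lw G"
    using box_x_range[OF cg, of "fst (vertex j)" "snd (vertex j)"] by auto
  have x: "fst (\<gamma> 1) = fst (vertex j) + fst (edge j)" using j by simp
  have nz: "fst (edge j) \<noteq> 0" using last_edge_not_vertical[OF op] by (simp add: j_def)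
  have v: "fst (vel_seg j) = rate j * fst (edge j)" "rate j > 0"
    using vel_seg_rate[OF j(1)] rate_pos[OF j(1)] by simp_all
  show ?thesis
  proof (cases "\<gamma> 1 \<in> openL G")
    case True
    then have "fst (\<gamma> 1) = 0" by (auto simp: openL_def)
    then have "fst (edge j) < 0" using x bounds nz by linarith
    then show ?thesis using True v by (simp add: j_def mult_pos_neg)
  next
    case False
    then have R: "\<gamma> 1 \<in> openR G" using op by (simp add: openings_def)
    then have "fst (\<gamma> 1) = Lw G" by (auto simp: openR_def)
    then have "fst (edge j) > 0" using x bounds nz by linarith
    then show ?thesis using R v by (simp add: j_def)
  qed
qed

lemma left_val_particle_vel: assumes "1 \<le> i" "i \<le> m" shows "left_val particle_vel (arrival i) (vel_seg (i - 1))"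
  unfolding left_val_def
proof (intro exI[of _ "arrival i - arrival (i - 1)"] conjI ballI)
  show "0 < arrival i - arrival (i - 1)" using arrival_less[of "i - 1" i] assms by simp
  fix u assume u: "u \<in> {arrival i - (arrival i - arrival (i - 1))<..<arrival i}"
  have "seg_at u = i - 1" using u assms by (intro seg_at_eq) auto
  then show "particle_vel u = vel_seg (i - 1)" by (simp add: particle_vel_def)
qed

lemma particle_vel_arrival: assumes "i < m" shows "particle_vel (arrival i) = vel_seg i"
proof -
  have "seg_at (arrival i) = i" using assms arrival_less[of i "Suc i"] by (intro seg_at_eq) auto
  then show ?thesis by (simp add: particle_vel_def)
qed

lemma drive_time_not_arrival: assumes "1 \<le> j" shows "drive_time j \<noteq> arrival l"
proof
  assume e: "drive_time j = arrival l"
  have "arrival (j - 1) < arrival l" "arrival l < arrival j" using drive_time_bounds[OF assms] e by auto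
  then have "j - 1 < l" "l < j" using arrival_strict_mono by (auto simp: strict_mono_less)
  then show False by simp
qed

definition horizon :: real where "horizon = (if \<gamma> 1 \<in> openings G then t_end + 1 else t_end)"

definition particle :: ptraj where
  "particle = \<lparr>t_in = 0, t_out = t_end, pos = particle_pos, vel = particle_vel,
     jumps = arrival ` jump_idx, djumps = arrival ` disk_idx\<rparr>"

definition driver_at :: "nat \<Rightarrow> ptraj" where
  "driver_at k = (SOME D. traj_ok G horizon spin D \<and> driver G horizon D \<and> djumps D = {drive_time k})"

definition drivers :: "ptraj list" where "drivers = map driver_at [1..<m]"

lemma t_end_le_horizon: "t_end \<le> horizon" by (simp add: horizon_def)

lemma driver_at_props:
  assumes k: "k \<in> {1..<m}"
  shows "traj_ok G horizon spin (driver_at k) \<and> driver G horizon (driver_at k) \<and>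
    djumps (driver_at k) = {drive_time k}"
proof -
  have "drive_time k < arrival k" using drive_time_bounds k by simp
  also have "arrival k \<le> t_end" unfolding t_end_def using k by (intro arrival_le) simp
  finally have "drive_time k < horizon" using t_end_le_horizon by simp
  then show ?thesis
    unfolding driver_at_def using k
    by (intro someI_ex[OF driver_exists[OF cg drive_time_pos _ spin_at_drive(2) spin_at_drive(1)]]) auto
qed

lemma particle_wall_collisions:
  assumes "\<tau> \<in> arrival ` jump_idx - arrival ` disk_idx"
  shows "\<exists>vm. left_val particle_vel \<tau> vm \<and> wall_rule G (particle_pos \<tau>) vm (particle_vel \<tau>)"
proof -
  obtain i where i: "i \<in> jump_idx - disk_idx" "\<tau> = arrival i" using assms by auto
  then have "1 \<le> i" "i < m" by (auto simp: jump_idx_def)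
  then have "left_val particle_vel \<tau> (vel_seg (i - 1))" "particle_pos \<tau> = vertex i" "particle_vel \<tau> = vel_seg i"
    using left_val_particle_vel[of i] particle_pos_arrival[of i] particle_vel_arrival[of i] i(2) by simp_all
  then show ?thesis using wall_collision[OF i(1)] by (intro exI[of _ "vel_seg (i - 1)"]) simp
qed

lemma particle_disk_collisions:
  assumes "\<tau> \<in> arrival ` disk_idx"
  shows "\<exists>vm wm. left_val particle_vel \<tau> vm \<and> left_val spin \<tau> wm \<and>
           disk_rule G (particle_pos \<tau>) vm (particle_vel \<tau>) wm (spin \<tau>)"
proof -
  obtain i where i: "i \<in> disk_idx" "\<tau> = arrival i" using assms by auto
  then have "1 \<le> i" "i < m" by (auto simp: disk_idx_def)
  then have "left_val particle_vel \<tau> (vel_seg (i - 1))" "particle_pos \<tau> = vertex i" "particle_vel \<tau> = vel_seg i"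
    using left_val_particle_vel[of i] particle_pos_arrival[of i] particle_vel_arrival[of i] i(2) by simp_all
  then show ?thesis
    using disk_collision[OF i(1)] spin_at_disk_vertex[OF i(1)] i(2)
    by (intro exI[of _ "vel_seg (i - 1)"] exI[of _ "spin_before i"]) simp
qed

lemma particle_exit:
  assumes "\<gamma> 1 \<in> openings G"
  shows "\<exists>vm. left_val particle_vel t_end vm \<and>
           (particle_pos t_end \<in> openL G \<and> fst vm < 0 \<or> particle_pos t_end \<in> openR G \<and> 0 < fst vm)"
proof -
  have "left_val particle_vel t_end (vel_seg (m - 1))" "particle_pos t_end = \<gamma> 1"
    using left_val_particle_vel[of m] m_ge_1 reparam_end by (simp_all add: t_end_def particle_pos_def)
  then show ?thesis using exit_velocity[OF assms] by (intro exI[of _ "vel_seg (m - 1)"]) simp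
qed

lemma jump_times_inside: "arrival ` jump_idx \<subseteq> {0<..<t_end}"
proof
  fix x assume "x \<in> arrival ` jump_idx"
  then obtain i where "i \<in> {1..<m}" "x = arrival i" by (auto simp: jump_idx_def)
  then show "x \<in> {0<..<t_end}" using arrival_less[of 0 i] arrival_less[of i m] by (auto simp: t_end_def)
qed

lemma particle_traj_ok: "traj_ok G horizon spin particle"
  unfolding traj_ok_def particle_def ptraj.simps
proof (intro conjI)
  show "(0::real) \<le> 0" "0 \<le> t_end" "t_end \<le> horizon"
    using t_end_pos t_end_le_horizon by auto
  show "finite (arrival ` jump_idx)" by (simp add: jump_idx_def)
  show "arrival ` jump_idx \<subseteq> {0<..<t_end}" by (rule jump_times_inside)
  show "arrival ` disk_idx \<subseteq> arrival ` jump_idx" using disk_idx_subset_jump_idx by blast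
  show "\<forall>t\<in>{0..t_end}. particle_pos t \<in> cell G"
    using reparam_range path_in_cell by (auto simp: particle_pos_def)
  show "t_end < horizon \<longrightarrow> 0 < t_end \<and> (\<exists>vm. left_val particle_vel t_end vm \<and>
      (particle_pos t_end \<in> openL G \<and> fst vm < 0 \<or> particle_pos t_end \<in> openR G \<and> 0 < fst vm))"
    using particle_exit t_end_pos by (simp add: horizon_def)
qed (use free_flight_pos free_flight_vel particle_wall_collisions particle_disk_collisions in blast)+

lemma djumps_nth:
  assumes "i < m"
  shows "djumps ((particle # drivers) ! i) = (if i = 0 then arrival ` disk_idx else {drive_time i})"
  using assms driver_at_props[of i] by (cases i) (auto simp: particle_def drivers_def)

lemma disk_times_distinct:
  assumes "i < m" "j < m" "i \<noteq> j"
  shows "djumps ((particle # drivers) ! i) \<inter> djumps ((particle # drivers) ! j) = {}"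
proof -
  have "drive_time k \<notin> arrival ` disk_idx" if "1 \<le> k" for k
    using drive_time_not_arrival[OF that] by auto
  moreover have "drive_time i \<noteq> drive_time j"
    using drive_time_strict_mono assms(3) by (simp add: strict_mono_eq)
  ultimately show ?thesis
    unfolding djumps_nth[OF assms(1)] djumps_nth[OF assms(2)] using assms by auto
qed

lemma disk_collision_times:
  "(\<Union>Q\<in>set (particle # drivers). djumps Q) = arrival ` disk_idx \<union> drive_time ` {1..<m}"
  using driver_at_props by (auto simp: particle_def drivers_def)

lemma evolution_particles: "evolution G horizon spin particle drivers"
  unfolding evolution_def Let_def
proof (intro conjI)
  show "traj_ok G horizon spin particle" by (rule particle_traj_ok)
  show "\<forall>D\<in>set drivers. traj_ok G horizon spin D \<and> injected G D"
    using driver_at_props by (auto simp: drivers_def driver_def)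
  show "\<forall>i<length (particle # drivers). \<forall>j<length (particle # drivers). i \<noteq> j \<longrightarrow>
          djumps ((particle # drivers) ! i) \<inter> djumps ((particle # drivers) ! j) = {}"
    using disk_times_distinct m_ge_1 by (simp add: drivers_def)
  show "\<forall>s t. 0 \<le> s \<and> s \<le> t \<and> t \<le> horizon \<and>
      (\<Union>Q\<in>set (particle # drivers). djumps Q) \<inter> {s<..t} = {} \<longrightarrow> spin t = spin s"
    unfolding disk_collision_times using spin_const by blast
qed

lemma drivers_steer_particle:
  "\<exists>T \<omega> P Ds Tf. evolution G T \<omega> P Ds \<and> \<omega> 0 = \<omega>0 \<and>
     t_in P = 0 \<and> pos P 0 = \<gamma> 0 \<and> vel P 0 = \<mu> *\<^sub>R (\<gamma> (s 1) - \<gamma> (s 0)) \<and>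
     (\<forall>D\<in>set Ds. driver G T D) \<and> follows P \<gamma> Tf \<and>
     (\<gamma> 1 \<in> openings G \<longrightarrow> t_out P = Tf \<and> Tf < T)"
proof (intro exI conjI)
  show "evolution G horizon spin particle drivers" by (rule evolution_particles)
  show "spin 0 = \<omega>0" by (rule spin_0)
  show "t_in particle = 0" "pos particle 0 = \<gamma> 0"
    using reparam_0 by (simp_all add: particle_def particle_pos_def)
  show "vel particle 0 = \<mu> *\<^sub>R (\<gamma> (s 1) - \<gamma> (s 0))"
    using particle_vel_arrival[of 0] m_ge_1 by (simp add: particle_def edge_def vertex_def)
  show "\<forall>D\<in>set drivers. driver G horizon D" using driver_at_props by (auto simp: drivers_def)
  show "follows particle \<gamma> t_end"
    unfolding follows_def
    using t_end_pos reparam_cont reparam_mono reparam_0 reparam_end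
    by (intro conjI exI[of _ reparam]) (auto simp: particle_def particle_pos_def)
  show "\<gamma> 1 \<in> openings G \<longrightarrow> t_out particle = t_end \<and> t_end < horizon"
    by (simp add: particle_def horizon_def)
qed

end

theorem proposition1:
  fixes G :: cellgeom and \<gamma> :: "real \<Rightarrow> pt" and m :: nat and s :: "nat \<Rightarrow> real"
    and v0 :: pt and \<mu> :: real and \<omega>0 :: real
  assumes "cell_geometry G"
    and "admissible_path G \<gamma> m s"
    and "\<mu> > 0" and "v0 = \<mu> *\<^sub>R (\<gamma> (s 1) - \<gamma> (s 0))"
  shows "\<exists>T \<omega> P0 Ds Tf.
           evolution G T \<omega> P0 Ds \<and> \<omega> 0 = \<omega>0 \<and>
           t_in P0 = 0 \<and> pos P0 0 = \<gamma> 0 \<and> vel P0 0 = v0 \<and>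
           (\<forall>D\<in>set Ds. driver G T D) \<and>
           follows P0 \<gamma> Tf \<and>
           (\<gamma> 1 \<in> openings G \<longrightarrow> t_out P0 = Tf \<and> Tf < T)"
proof -
  interpret driven_path G \<gamma> m s \<mu> \<omega>0 using assms(1-3) by unfold_locales
  show ?thesis using drivers_steer_particle assms(4) by simp
qed

end
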